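(* Let $\mathcal O$ be a cyclic operad with $\mathcal O[m]$ finite-dimensional for all $m$. Then on $\mathcal{OG}$: (a) $\partial_H^2=0$; (b) $\partial_H\partial_E+\partial_E\partial_H=0$.
   Context: Work over $\mathbb R$. $\mathcal O$ is a cyclic operad; $\mathcal S[m]$ ($m\ge2$) its spaces of spiders (coinvariants of $\bigoplus_L\mathcal O[m-1]$ over labelings $L$ of the legs of an $m$-star), with mating $(S,\lambda)\circ(\mu,T)$ induced by operad composition along legs $\lambda,\mu$. An $\mathcal O$-graph is an oriented graph (vertex ordering plus edge directions, up to even changes) without univalent vertices, each vertex colored by a spider whose legs are the incident half-edges; $\mathcal{OG}$ is spanned by $\mathcal O$-graphs modulo orientation reversal $=-1$ and vertex-linearity. For an $\mathcal O$-graph $\mathbf X$ and an edge $e$: $\mathbf X_e=0$ if $e$ is a loop; otherwise, with orientation represented so that the endpoints $v,w$ of $e$ are first and second and $e$ is directed $v\to w$, $\mathbf X_e$ collapses $e$, colors the new vertex by the mating of the spiders at $v,w$ along the half-edges of $e$, and puts it first; $\partial_E\mathbf X=\sum_e\mathbf X_e$. For a pairing $\pi$ of the half-edges $H(X)$, $X^\pi$ is obtained by regluing half-edges according to $\pi$; the union of the chord diagrams of $\pi$ and of the standard pairing $\{x,\bar x\}$ is a union of circles, and choosing a representative orientation of $X$ whose edge directions are coherent around each circle, $X^\pi$ gets induced edge directions and the same vertex order; $\mathbf X^\pi$ is the resulting $\mathcal O$-graph. For half-edges $x,y$, $\pi_{xy}$ is the pairing agreeing with the standard one except that it pairs $\{x,y\}$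 and $\{\bar x,\bar y\}$. The H-boundary is $\partial_H\mathbf X=\sum_{x,y,\ x\neq\bar y}(\mathbf X^{\pi_{xy}})_{x\cup y}$, the sum over pairs of distinct half-edges $x,y$ with $x\ne\bar y$, where $x\cup y$ denotes the edge of $X^{\pi_{xy}}$ formed by $x$ and $y$. *)

theory Defs
  imports Complex_Main "HOL-Combinatorics.Permutations" "HOL-Library.Function_Algebras"
begin

text \<open>A cyclic operad over the reals is presented by its components Op(S), one real vector
space for every finite set S of "legs" (here: labels of type 'h), all realised as subspaces of
one ambient real vector space 'v.  cmp S x T y a b is the partial composition of a in Op(S)
with b in Op(T) along the legs x of S and y of T (S, T disjoint), landing in
Op((S - {x}) \<union> (T - {y})); ren \<sigma> S a is the action of a bijection \<sigma> : S \<rightarrow> \<sigma> ` S;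
un x y is the unit in Op({x,y}).  Op[n] of the paper is Op(S) for |S| = n + 1.\<close>

definition cyclic_operad ::
  "('h set \<Rightarrow> 'v::real_vector set) \<Rightarrow> ('h set \<Rightarrow> 'h \<Rightarrow> 'h set \<Rightarrow> 'h \<Rightarrow> 'v \<Rightarrow> 'v \<Rightarrow> 'v)
    \<Rightarrow> (('h \<Rightarrow> 'h) \<Rightarrow> 'h set \<Rightarrow> 'v \<Rightarrow> 'v) \<Rightarrow> ('h \<Rightarrow> 'h \<Rightarrow> 'v) \<Rightarrow> bool" where
  "cyclic_operad Op cmp ren un \<longleftrightarrow>
    (\<forall>S. finite S \<longrightarrow> subspace (Op S)) \<and>
    (\<forall>S T x y a b. finite S \<and> finite T \<and> S \<inter> T = {} \<and> x \<in> S \<and> y \<in> T \<and> a \<in> Op S \<and> b \<in> Op T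
        \<longrightarrow> cmp S x T y a b \<in> Op ((S - {x}) \<union> (T - {y}))) \<and>
    (\<forall>S T x y a a' b r. finite S \<and> finite T \<and> S \<inter> T = {} \<and> x \<in> S \<and> y \<in> T \<and>
        a \<in> Op S \<and> a' \<in> Op S \<and> b \<in> Op T
        \<longrightarrow> cmp S x T y (a + r *\<^sub>R a') b = cmp S x T y a b + r *\<^sub>R cmp S x T y a' b) \<and>
    (\<forall>S T x y a b b' r. finite S \<and> finite T \<and> S \<inter> T = {} \<and> x \<in> S \<and> y \<in> T \<and>
        a \<in> Op S \<and> b \<in> Op T \<and> b' \<in> Op T
        \<longrightarrow> cmp S x T y a (b + r *\<^sub>R b') = cmp S x T y a b + r *\<^sub>R cmp S x T y a b') \<and>
    (\<forall>\<sigma> S a. finite S \<and> inj_on \<sigma> S \<and> a \<in> Op S \<longrightarrow> ren \<sigma> S a \<in> Op (\<sigma> ` S)) \<and>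
    (\<forall>\<sigma> S a a' r. finite S \<and> inj_on \<sigma> S \<and> a \<in> Op S \<and> a' \<in> Op S
        \<longrightarrow> ren \<sigma> S (a + r *\<^sub>R a') = ren \<sigma> S a + r *\<^sub>R ren \<sigma> S a') \<and>
    (\<forall>S a. finite S \<and> a \<in> Op S \<longrightarrow> ren id S a = a) \<and>
    (\<forall>\<sigma> \<tau> S a. finite S \<and> inj_on \<sigma> S \<and> inj_on \<tau> (\<sigma> ` S) \<and> a \<in> Op S
        \<longrightarrow> ren \<tau> (\<sigma> ` S) (ren \<sigma> S a) = ren (\<tau> \<circ> \<sigma>) S a) \<and>
    (\<forall>\<sigma> \<tau> S a. finite S \<and> inj_on \<sigma> S \<and> (\<forall>z\<in>S. \<sigma> z = \<tau> z) \<and> a \<in> Op S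
        \<longrightarrow> ren \<sigma> S a = ren \<tau> S a) \<and>
    (\<forall>\<sigma> S T x y a b. finite S \<and> finite T \<and> S \<inter> T = {} \<and> x \<in> S \<and> y \<in> T \<and> a \<in> Op S \<and> b \<in> Op T
        \<and> inj_on \<sigma> (S \<union> T)
        \<longrightarrow> ren \<sigma> ((S - {x}) \<union> (T - {y})) (cmp S x T y a b)
            = cmp (\<sigma> ` S) (\<sigma> x) (\<sigma> ` T) (\<sigma> y) (ren \<sigma> S a) (ren \<sigma> T b)) \<and>
    (\<forall>S T x y a b. finite S \<and> finite T \<and> S \<inter> T = {} \<and> x \<in> S \<and> y \<in> T \<and> a \<in> Op S \<and> b \<in> Op T
        \<longrightarrow> cmp S x T y a b = cmp T y S x b a) \<and>
    (\<forall>S T U x y z w a b c. finite S \<and> finite T \<and> finite U \<and>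
        S \<inter> T = {} \<and> S \<inter> U = {} \<and> T \<inter> U = {} \<and>
        x \<in> S \<and> y \<in> T \<and> z \<in> T \<and> y \<noteq> z \<and> w \<in> U \<and> a \<in> Op S \<and> b \<in> Op T \<and> c \<in> Op U
        \<longrightarrow> cmp ((S - {x}) \<union> (T - {y})) z U w (cmp S x T y a b) c
            = cmp S x ((T - {z}) \<union> (U - {w})) y a (cmp T z U w b c)) \<and>
    (\<forall>x y. x \<noteq> y \<longrightarrow> un x y \<in> Op {x, y}) \<and>
    (\<forall>x y. un x y = un y x) \<and>
    (\<forall>\<sigma> x y. x \<noteq> y \<and> inj_on \<sigma> {x, y} \<longrightarrow> ren \<sigma> {x, y} (un x y) = un (\<sigma> x) (\<sigma> y)) \<and>
    (\<forall>x y T z a. finite T \<and> x \<noteq> y \<and> x \<notin> T \<and> y \<notin> T \<and> z \<in> T \<and> a \<in> Op T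
        \<longrightarrow> cmp {x, y} y T z (un x y) a = ren (id(z := x)) T a)"

definition finite_dimensional_components :: "('h set \<Rightarrow> 'v::real_vector set) \<Rightarrow> bool" where
  "finite_dimensional_components Op \<longleftrightarrow> (\<forall>S. finite S \<longrightarrow> (\<exists>B. finite B \<and> Op S \<subseteq> span B))"

text \<open>A (representative of an) Op-graph is a tuple (V, \<iota>, T, c):
 \<^item> V: the list of vertices in their chosen order; each vertex is the (finite) set of its
   half-edges, so the half-edge set is H = \<Union>(set V);
 \<^item> \<iota>: the fixed-point-free involution of H pairing each half-edge x with x-bar
   (the edges are the orbits {x, \<iota> x}); \<iota> is the identity off H;
 \<^item> T: the set of tails, containing exactly one half-edge of each edge (edge directions:
   the edge {t, \<iota> t} with t \<in> T is directed from the vertex of t to the vertex of \<iota> t);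
 \<^item> c: the colouring, c v \<in> Op(v) being the spider at v, whose legs are the half-edges at v;
   c is 0 off the vertices.\<close>

type_synonym ('h, 'v) ograph = "'h set list \<times> ('h \<Rightarrow> 'h) \<times> 'h set \<times> ('h set \<Rightarrow> 'v)"

definition hedges :: "'h set list \<Rightarrow> 'h set" where
  "hedges V = \<Union> (set V)"

definition ograph_wf :: "('h set \<Rightarrow> 'v::real_vector set) \<Rightarrow> ('h, 'v) ograph \<Rightarrow> bool" where
  "ograph_wf Op X \<longleftrightarrow> (case X of (V, \<iota>, T, c) \<Rightarrow>
     distinct V \<and>
     (\<forall>v\<in>set V. finite v \<and> 2 \<le> card v) \<and>
     (\<forall>u\<in>set V. \<forall>v\<in>set V. u \<noteq> v \<longrightarrow> u \<inter> v = {}) \<and>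
     (\<forall>h\<in>hedges V. \<iota> h \<in> hedges V \<and> \<iota> h \<noteq> h \<and> \<iota> (\<iota> h) = h) \<and>
     (\<forall>h. h \<notin> hedges V \<longrightarrow> \<iota> h = h) \<and>
     T \<subseteq> hedges V \<and> (\<forall>h\<in>hedges V. h \<in> T \<longleftrightarrow> \<iota> h \<notin> T) \<and>
     (\<forall>v\<in>set V. c v \<in> Op v) \<and> (\<forall>u. u \<notin> set V \<longrightarrow> c u = 0))"

text \<open>Formal linear combinations are functions into the reals (pointwise addition from
Function_Algebras); only finitely supported ones occur.\<close>

definition gen :: "'g \<Rightarrow> 'g \<Rightarrow> real" where
  "gen g = (\<lambda>g'. if g' = g then 1 else 0)"

definition fscale :: "real \<Rightarrow> ('g \<Rightarrow> real) \<Rightarrow> 'g \<Rightarrow> real" where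
  "fscale r f = (\<lambda>g. r * f g)"

definition fspan :: "('g \<Rightarrow> real) set \<Rightarrow> ('g \<Rightarrow> real) set" where
  "fspan R = {f. \<exists>A cf. finite A \<and> A \<subseteq> R \<and> f = (\<Sum>r\<in>A. fscale (cf r) r)}"

definition lin_ext :: "('g \<Rightarrow> 'g' \<Rightarrow> real) \<Rightarrow> ('g \<Rightarrow> real) \<Rightarrow> 'g' \<Rightarrow> real" where
  "lin_ext D f = (\<Sum>g\<in>{g. f g \<noteq> 0}. fscale (f g) (D g))"

text \<open>Sign of the reordering of a list of distinct elements: ys ! i = xs ! p i.\<close>
definition list_sign :: "'a list \<Rightarrow> 'a list \<Rightarrow> real" where
  "list_sign xs ys =
     (if distinct xs \<and> distinct ys \<and> set xs = set ys
      then of_int (sign (\<lambda>i. if i < length xs then (THE j. j < length xs \<and> xs ! j = ys ! i) else i))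
      else 0)"

definition relabel :: "(('h \<Rightarrow> 'h) \<Rightarrow> 'h set \<Rightarrow> 'v \<Rightarrow> 'v) \<Rightarrow> ('h \<Rightarrow> 'h)
    \<Rightarrow> ('h, 'v::zero) ograph \<Rightarrow> ('h, 'v) ograph" where
  "relabel ren \<sigma> X = (case X of (V, \<iota>, T, c) \<Rightarrow>
     (map ((`) \<sigma>) V, \<sigma> \<circ> \<iota> \<circ> inv \<sigma>, \<sigma> ` T,
      (\<lambda>u. if u \<in> set (map ((`) \<sigma>) V) then ren \<sigma> (inv \<sigma> ` u) (c (inv \<sigma> ` u)) else 0)))"

text \<open>The relations defining OG: change of orientation (sign of the vertex permutation times
(-1)^(number of reversed edges)), vertex-linearity, and isomorphism (relabelling).\<close>
definition og_rel :: "('h set \<Rightarrow> 'v::real_vector set) \<Rightarrow> (('h \<Rightarrow> 'h) \<Rightarrow> 'h set \<Rightarrow> 'v \<Rightarrow> 'v)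
    \<Rightarrow> (('h, 'v) ograph \<Rightarrow> real) set" where
  "og_rel Op ren =
     {gen (V', \<iota>, T', c) - fscale (list_sign V V' * (-1) ^ card (T - T')) (gen (V, \<iota>, T, c))
        | V V' \<iota> T T' c. ograph_wf Op (V, \<iota>, T, c) \<and> ograph_wf Op (V', \<iota>, T', c) \<and> set V' = set V}
   \<union> {gen (V, \<iota>, T, c(v := a + r *\<^sub>R b)) - gen (V, \<iota>, T, c(v := a)) - fscale r (gen (V, \<iota>, T, c(v := b)))
        | V \<iota> T c v a b r. ograph_wf Op (V, \<iota>, T, c) \<and> v \<in> set V \<and> a \<in> Op v \<and> b \<in> Op v}
   \<union> {gen (relabel ren \<sigma> X) - gen X | \<sigma> X. bij \<sigma> \<and> ograph_wf Op X}"

text \<open>The space OG is the span of the well-formed generators modulo the span of og_rel;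
"f = 0 in OG" means f \<in> fspan (og_rel Op ren).\<close>
definition og_gens :: "('h set \<Rightarrow> 'v::real_vector set) \<Rightarrow> (('h, 'v) ograph \<Rightarrow> real) set" where
  "og_gens Op = {gen X | X. ograph_wf Op X}"

text \<open>X_e for the edge e = {t, \<iota> t} with t taken as the tail: v = vertex of t, w = vertex of
\<iota> t; the orientation is first rewritten as (v # w # rest, T) (sign list_sign), e is collapsed,
the new vertex (v \<union> w) - e is put first and coloured by the mating of the spiders at v and w
along t and \<iota> t.\<close>
definition contract :: "('h set \<Rightarrow> 'h \<Rightarrow> 'h set \<Rightarrow> 'h \<Rightarrow> 'v \<Rightarrow> 'v \<Rightarrow> 'v)
    \<Rightarrow> ('h, 'v::real_vector) ograph \<Rightarrow> 'h \<Rightarrow> ('h, 'v) ograph \<Rightarrow> real" where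
  "contract cmp X t = (case X of (V, \<iota>, T, c) \<Rightarrow>
     (let v = (THE v. v \<in> set V \<and> t \<in> v); w = (THE w. w \<in> set V \<and> \<iota> t \<in> w) in
      if v = w then 0 else
      (let n = (v \<union> w) - {t, \<iota> t};
           rest = filter (\<lambda>u. u \<noteq> v \<and> u \<noteq> w) V;
           \<iota>' = (\<lambda>h. if h = t \<or> h = \<iota> t then h else \<iota> h);
           c' = (\<lambda>u. if u = n then cmp v t w (\<iota> t) (c v) (c w)
                     else if u \<in> set rest then c u else 0)
       in fscale (list_sign V (v # w # rest)) (gen (n # rest, \<iota>', T - {t}, c')))))"

definition dE :: "('h set \<Rightarrow> 'h \<Rightarrow> 'h set \<Rightarrow> 'h \<Rightarrow> 'v \<Rightarrow> 'v \<Rightarrow> 'v)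
    \<Rightarrow> ('h, 'v::real_vector) ograph \<Rightarrow> ('h, 'v) ograph \<Rightarrow> real" where
  "dE cmp X = (case X of (V, \<iota>, T, c) \<Rightarrow> (\<Sum>t\<in>T. contract cmp X t))"

text \<open>X^{\<pi>_xy}: x is paired with y and \<iota> x with \<iota> y.  The representative orientation coherent
around the circle x, \<iota> x, \<iota> y, y has tails x and \<iota> y (reached from T by reversing the edges
whose tail is not already x resp. \<iota> y); the induced directions of the new edges have tails
\<iota> x (edge {\<iota> x, \<iota> y}) and y (edge x \<union> y = {x, y}).\<close>
definition reglue :: "('h, 'v) ograph \<Rightarrow> 'h \<Rightarrow> 'h \<Rightarrow> real \<times> ('h, 'v) ograph" where
  "reglue X x y = (case X of (V, \<iota>, T, c) \<Rightarrow>
     ((-1) ^ card ({x, \<iota> y} - T),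
      (V, (\<lambda>h. if h = x then y else if h = y then x else if h = \<iota> x then \<iota> y
               else if h = \<iota> y then \<iota> x else \<iota> h),
       (T - {x, \<iota> x, y, \<iota> y}) \<union> {\<iota> x, y}, c)))"

text \<open>H-boundary: sum over (ordered) pairs of distinct half-edges x, y with x \<noteq> \<iota> y of
(X^{\<pi>_xy})_{x \<union> y}; the edge x \<union> y has tail y in X^{\<pi>_xy}.\<close>
definition dH :: "('h set \<Rightarrow> 'h \<Rightarrow> 'h set \<Rightarrow> 'h \<Rightarrow> 'v \<Rightarrow> 'v \<Rightarrow> 'v)
    \<Rightarrow> ('h, 'v::real_vector) ograph \<Rightarrow> ('h, 'v) ograph \<Rightarrow> real" where
  "dH cmp X = (case X of (V, \<iota>, T, c) \<Rightarrow>
     (\<Sum>(x, y)\<in>{(x, y). x \<in> hedges V \<and> y \<in> hedges V \<and> x \<noteq> y \<and> x \<noteq> \<iota> y}.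
        fscale (fst (reglue X x y)) (contract cmp (snd (reglue X x y)) y)))"

end

theory Submission
  imports Defs
begin

(* Both identities are checked on generators, where each side expands into terms that cancel in
   pairs. All terms are double contractions: contract an edge e, then an edge f. The key fact is
   that contracting e then f and contracting f then e give the same Op-graph with opposite
   orientations (contract2_antisym): the spiders agree by commutativity and associativity of
   mating, and the signs differ by a transposition in the vertex order or by a reversed edge.
   In the square of the H-boundary, the term for the pairs (x, y), (x', y') cancels the term for
   (x', y'), (x, y), as regluing in either order yields the same graph. In the anticommutator, the
   term contracting an edge t of X and then the reglued edge x \<union> y cancels the one contracting
   x \<union> y and then t; the remaining terms of the E-boundary contract both new edges x \<union> y and
   {\<iota> x, \<iota> y}, and the terms for (x, y) and (\<iota> x, \<iota> y) cancel. *)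

definition finite_supp :: "('g \<Rightarrow> real) \<Rightarrow> bool" where
  "finite_supp f \<longleftrightarrow> finite {g. f g \<noteq> 0}"

lemma fscale_apply [simp]: "fscale r f g = r * f g"
  by (simp add: fscale_def)

lemma finite_supp_zero [simp]: "finite_supp 0"
  by (simp add: finite_supp_def)

lemma finite_supp_gen [simp]: "finite_supp (gen g)"
  by (simp add: finite_supp_def gen_def)

lemma finite_supp_add [simp]: "finite_supp f \<Longrightarrow> finite_supp g \<Longrightarrow> finite_supp (f + g)"
  unfolding finite_supp_def
  by (rule finite_subset[of _ "{g. f g \<noteq> 0} \<union> {x. g x \<noteq> 0}"]) auto

lemma finite_supp_fscale [simp]: "finite_supp f \<Longrightarrow> finite_supp (fscale r f)"
  unfolding finite_supp_def by (rule finite_subset[of _ "{g. f g \<noteq> 0}"]) auto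

lemma finite_supp_sum [simp]: "(\<And>i. i \<in> I \<Longrightarrow> finite_supp (F i)) \<Longrightarrow> finite_supp (\<Sum>i\<in>I. F i)"
  by (induction I rule: infinite_finite_induct) auto

lemma sum_fun_apply: "(\<Sum>i\<in>I. F i) g = (\<Sum>i\<in>I. F i g)"
  by (induction I rule: infinite_finite_induct) auto

lemma fscale_add: "fscale r (f + g) = fscale r f + fscale r g"
  by (auto simp: fun_eq_iff algebra_simps)

lemma fscale_sum: "fscale r (\<Sum>i\<in>I. F i) = (\<Sum>i\<in>I. fscale r (F i))"
  by (simp add: fun_eq_iff sum_fun_apply sum_distrib_left)

lemma fscale_fscale [simp]: "fscale r (fscale s f) = fscale (r * s) f"
  by (auto simp: fun_eq_iff)

lemma fscale_zero [simp]: "fscale r 0 = 0" "fscale 0 f = 0"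
  by (auto simp: fun_eq_iff)

lemma fscale_one [simp]: "fscale 1 f = f"
  by (auto simp: fun_eq_iff)

lemma lin_ext_superset:
  assumes "finite A" "{g. f g \<noteq> 0} \<subseteq> A"
  shows "lin_ext D f = (\<Sum>g\<in>A. fscale (f g) (D g))"
  unfolding lin_ext_def by (rule sum.mono_neutral_left) (use assms in auto)

lemma lin_ext_add:
  assumes "finite_supp f" "finite_supp g"
  shows "lin_ext D (f + g) = lin_ext D f + lin_ext D g"
proof -
  let ?A = "{x. f x \<noteq> 0} \<union> {x. g x \<noteq> 0}"
  have fin: "finite ?A" using assms by (auto simp: finite_supp_def)
  have "lin_ext D (f + g) = (\<Sum>x\<in>?A. fscale ((f + g) x) (D x))"
    by (rule lin_ext_superset) (use fin in auto)
  also have "\<dots> = (\<Sum>x\<in>?A. fscale (f x) (D x)) + (\<Sum>x\<in>?A. fscale (g x) (D x))"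
    by (simp add: sum.distrib[symmetric] fun_eq_iff sum_fun_apply algebra_simps)
  also have "\<dots> = lin_ext D f + lin_ext D g"
    by (subst (1 2) lin_ext_superset[of ?A]) (use fin in auto)
  finally show ?thesis .
qed

lemma lin_ext_fscale:
  assumes "finite_supp f"
  shows "lin_ext D (fscale r f) = fscale r (lin_ext D f)"
proof -
  let ?A = "{x. f x \<noteq> 0}"
  have fin: "finite ?A" using assms by (auto simp: finite_supp_def)
  have "lin_ext D (fscale r f) = (\<Sum>x\<in>?A. fscale (r * f x) (D x))"
    by (subst lin_ext_superset[of ?A]) (use fin in auto)
  also have "\<dots> = fscale r (lin_ext D f)"
    by (subst lin_ext_superset[of ?A]) (use fin in \<open>auto simp: fscale_sum\<close>)
  finally show ?thesis .
qed

lemma lin_ext_zero [simp]: "lin_ext D 0 = 0"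
  by (simp add: lin_ext_def)

lemma lin_ext_gen [simp]: "lin_ext D (gen g) = D g"
  by (subst lin_ext_superset[of "{g}"]) (auto simp: gen_def)

lemma lin_ext_sum:
  assumes "\<And>i. i \<in> I \<Longrightarrow> finite_supp (F i)"
  shows "lin_ext D (\<Sum>i\<in>I. F i) = (\<Sum>i\<in>I. lin_ext D (F i))"
  using assms
  by (induction I rule: infinite_finite_induct) (auto simp: lin_ext_add)

lemma lin_ext_lin_ext_combination:
  assumes gens: "\<forall>r\<in>A. \<exists>X. r = gen X" and D1: "\<And>X. finite_supp (D1 X)"
  shows "lin_ext D2 (lin_ext D1 (\<Sum>r\<in>A. fscale (cf r) r))
       = (\<Sum>r\<in>A. fscale (cf r) (lin_ext D2 (lin_ext D1 r)))"
proof -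
  have "lin_ext D1 (\<Sum>r\<in>A. fscale (cf r) r) = (\<Sum>r\<in>A. fscale (cf r) (lin_ext D1 r))"
    using gens by (subst lin_ext_sum) (auto simp: lin_ext_fscale intro!: sum.cong)
  then show ?thesis
    using gens D1 by (simp, subst lin_ext_sum) (auto simp: lin_ext_fscale intro!: sum.cong)
qed

lemma fspan_zero [simp]: "0 \<in> fspan R"
  unfolding fspan_def by (rule CollectI, rule exI[of _ "{}"]) auto

lemma fspan_base: "r \<in> R \<Longrightarrow> r \<in> fspan R"
  unfolding fspan_def by (rule CollectI, rule exI[of _ "{r}"], rule exI[of _ "\<lambda>_. 1"]) auto

lemma fspan_fscale: "f \<in> fspan R \<Longrightarrow> fscale a f \<in> fspan R"
  unfolding fspan_def
  by (force intro!: exI[of _ "\<lambda>r. a * _ r"] simp: fscale_sum)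

lemma fspan_add:
  assumes "f \<in> fspan R" "g \<in> fspan R"
  shows "f + g \<in> fspan R"
proof -
  obtain A cf B cg where A: "finite A" "A \<subseteq> R" "f = (\<Sum>r\<in>A. fscale (cf r) r)"
    and B: "finite B" "B \<subseteq> R" "g = (\<Sum>r\<in>B. fscale (cg r) r)"
    using assms unfolding fspan_def by blast
  define ch where "ch r = (if r \<in> A then cf r else 0) + (if r \<in> B then cg r else 0)" for r
  have "(\<Sum>r\<in>A \<union> B. fscale (ch r) r)
      = (\<Sum>r\<in>A \<union> B. fscale (if r \<in> A then cf r else 0) r)
      + (\<Sum>r\<in>A \<union> B. fscale (if r \<in> B then cg r else 0) r)"
    by (simp add: ch_def sum.distrib[symmetric] fun_eq_iff sum_fun_apply algebra_simps)
  also have "(\<Sum>r\<in>A \<union> B. fscale (if r \<in> A then cf r else 0) r) = f"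
    unfolding A(3) by (rule sum.mono_neutral_cong_right) (use A B in auto)
  also have "(\<Sum>r\<in>A \<union> B. fscale (if r \<in> B then cg r else 0) r) = g"
    unfolding B(3) by (rule sum.mono_neutral_cong_right) (use A B in auto)
  finally have "f + g = (\<Sum>r\<in>A \<union> B. fscale (ch r) r)" ..
  then show ?thesis
    unfolding fspan_def using A B by blast
qed

lemma fspan_sum: "(\<And>i. i \<in> I \<Longrightarrow> F i \<in> fspan R) \<Longrightarrow> (\<Sum>i\<in>I. F i) \<in> fspan R"
  by (induction I rule: infinite_finite_induct) (auto intro: fspan_add)

lemma sum_in_fspan_involution:
  assumes "finite S" and "\<And>i. i \<in> S \<Longrightarrow> \<phi> i \<in> S" "\<And>i. i \<in> S \<Longrightarrow> \<phi> (\<phi> i) = i"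
    and "\<And>i. i \<in> S \<Longrightarrow> F i + F (\<phi> i) \<in> fspan R"
  shows "(\<Sum>i\<in>S. F i) \<in> fspan R"
proof -
  have "bij_betw \<phi> S S"
    by (rule bij_betwI[of _ _ _ \<phi>]) (use assms in auto)
  then have "(\<Sum>i\<in>S. F (\<phi> i)) = (\<Sum>i\<in>S. F i)"
    by (rule sum.reindex_bij_betw)
  then have "(\<Sum>i\<in>S. F i + F (\<phi> i)) = fscale 2 (\<Sum>i\<in>S. F i)"
    by (simp add: sum.distrib fun_eq_iff)
  moreover have "(\<Sum>i\<in>S. F i + F (\<phi> i)) \<in> fspan R"
    by (rule fspan_sum) (use assms in auto)
  ultimately show ?thesis
    using fspan_fscale[of "fscale 2 _" R "1/2"] by simp
qed

lemma sum_add_sum_in_fspan_bij: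
  assumes "bij_betw \<phi> S S'" and "\<And>i. i \<in> S \<Longrightarrow> F i + G (\<phi> i) \<in> fspan R"
  shows "(\<Sum>i\<in>S. F i) + (\<Sum>j\<in>S'. G j) \<in> fspan R"
proof -
  have "(\<Sum>j\<in>S'. G j) = (\<Sum>i\<in>S. G (\<phi> i))"
    using sum.reindex_bij_betw[OF assms(1), of G] by simp
  then have "(\<Sum>i\<in>S. F i) + (\<Sum>j\<in>S'. G j) = (\<Sum>i\<in>S. F i + G (\<phi> i))"
    by (simp add: sum.distrib)
  also have "\<dots> \<in> fspan R"
    by (rule fspan_sum) (use assms(2) in auto)
  finally show ?thesis .
qed

section \<open>Signs of reorderings of lists\<close>

definition list_pos :: "'a list \<Rightarrow> 'a \<Rightarrow> nat" where
  "list_pos xs y = (THE j. j < length xs \<and> xs ! j = y)"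

lemma list_pos_spec:
  assumes "distinct xs" "y \<in> set xs"
  shows "list_pos xs y < length xs" "xs ! list_pos xs y = y"
proof -
  have "\<exists>!j. j < length xs \<and> xs ! j = y" using distinct_Ex1[OF assms] .
  from theI'[OF this] show "list_pos xs y < length xs" "xs ! list_pos xs y = y"
    unfolding list_pos_def by auto
qed

lemma list_pos_nth:
  assumes "distinct xs" "j < length xs"
  shows "list_pos xs (xs ! j) = j"
proof -
  have "\<exists>!i. i < length xs \<and> xs ! i = xs ! j" using distinct_Ex1[OF assms(1)] assms(2) by auto
  then show ?thesis unfolding list_pos_def using assms by (intro the1_equality) auto
qed

definition reorder_perm :: "'a list \<Rightarrow> 'a list \<Rightarrow> nat \<Rightarrow> nat" where
  "reorder_perm xs ys = (\<lambda>i. if i < length xs then list_pos xs (ys ! i) else i)"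

definition reordering :: "'a list \<Rightarrow> 'a list \<Rightarrow> bool" where
  "reordering xs ys \<longleftrightarrow> distinct xs \<and> distinct ys \<and> set xs = set ys"

lemma list_sign_reorder_perm: "reordering xs ys \<Longrightarrow> list_sign xs ys = of_int (sign (reorder_perm xs ys))"
  unfolding list_sign_def reordering_def reorder_perm_def list_pos_def by simp

lemma reordering_length: "reordering xs ys \<Longrightarrow> length xs = length ys"
  unfolding reordering_def by (metis distinct_card)

lemma reorder_perm_trans:
  assumes "reordering xs ys" "reordering ys zs"
  shows "reorder_perm xs zs = reorder_perm xs ys \<circ> reorder_perm ys zs"
proof
  fix i
  have l: "length xs = length ys" "length ys = length zs" using assms reordering_length by auto
  show "reorder_perm xs zs i = (reorder_perm xs ys \<circ> reorder_perm ys zs) i"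
  proof (cases "i < length xs")
    case True
    then have zi: "zs ! i \<in> set ys" using assms l unfolding reordering_def by (metis nth_mem)
    then show ?thesis using True l list_pos_spec[of ys "zs ! i"] assms unfolding reorder_perm_def reordering_def by auto
  qed (use l in \<open>auto simp: reorder_perm_def\<close>)
qed

lemma reorder_perm_permutes:
  assumes "reordering xs ys"
  shows "reorder_perm xs ys permutes {..<length xs}"
proof -
  have l: "length xs = length ys" using assms reordering_length by auto
  have d: "distinct xs" "distinct ys" and st: "set xs = set ys" using assms unfolding reordering_def by auto
  have mem: "ys ! i \<in> set xs" if "i < length xs" for i
    using that l st by (metis nth_mem)
  have inj: "inj_on (reorder_perm xs ys) {..<length xs}"
  proof (rule inj_onI)
    fix i j assume ij: "i \<in> {..<length xs}" "j \<in> {..<length xs}" "reorder_perm xs ys i = reorder_perm xs ys j"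
    have i: "i < length xs" and j: "j < length xs" using ij(1,2) by auto
    have "xs ! list_pos xs (ys ! i) = ys ! i" by (rule list_pos_spec(2)[OF d(1) mem[OF i]])
    moreover have "xs ! list_pos xs (ys ! j) = ys ! j" by (rule list_pos_spec(2)[OF d(1) mem[OF j]])
    moreover have "list_pos xs (ys ! i) = list_pos xs (ys ! j)" using ij(3) i j by (simp add: reorder_perm_def)
    ultimately have "ys ! i = ys ! j" by metis
    then show "i = j" using i j l d(2) by (simp add: nth_eq_iff_index_eq)
  qed
  have maps: "reorder_perm xs ys ` {..<length xs} \<subseteq> {..<length xs}"
  proof
    fix k assume "k \<in> reorder_perm xs ys ` {..<length xs}"
    then obtain i where i: "i < length xs" "k = reorder_perm xs ys i" by auto
    then have "k = list_pos xs (ys ! i)" by (simp add: reorder_perm_def)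
    then show "k \<in> {..<length xs}" using list_pos_spec(1)[OF d(1) mem[OF i(1)]] by simp
  qed
  have "bij_betw (reorder_perm xs ys) {..<length xs} {..<length xs}"
    using inj maps by (simp add: bij_betw_def endo_inj_surj)
  then show ?thesis by (rule bij_imp_permutes) (simp add: reorder_perm_def)
qed

lemma reordering_trans: "reordering xs ys \<Longrightarrow> reordering ys zs \<Longrightarrow> reordering xs zs"
  unfolding reordering_def by auto
lemma reordering_refl: "distinct xs \<Longrightarrow> reordering xs xs"
  unfolding reordering_def by auto

lemma list_sign_trans:
  assumes "reordering xs ys" "reordering ys zs"
  shows "list_sign xs zs = list_sign xs ys * list_sign ys zs"
proof -
  have l: "length xs = length ys" using assms reordering_length by auto
  have p1: "permutation (reorder_perm xs ys)" using reorder_perm_permutes[OF assms(1)] by (rule permutes_imp_permutation[rotated]) simp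
  have p2: "permutation (reorder_perm ys zs)" using reorder_perm_permutes[OF assms(2)] by (rule permutes_imp_permutation[rotated]) simp
  show ?thesis
    using assms reordering_trans[OF assms] by (simp add: list_sign_reorder_perm reorder_perm_trans sign_compose[OF p1 p2])
qed

lemma list_sign_refl: "distinct xs \<Longrightarrow> list_sign xs xs = 1"
proof -
  assume d: "distinct xs"
  have "reorder_perm xs xs = id" using list_pos_nth[OF d] by (auto simp: reorder_perm_def fun_eq_iff)
  then show ?thesis using d by (simp add: list_sign_reorder_perm reordering_refl)
qed

lemma list_pos_Cons:
  assumes "distinct (a # xs)" "y \<in> set xs"
  shows "list_pos (a # xs) y = Suc (list_pos xs y)"
proof -
  have "(a # xs) ! Suc (list_pos xs y) = y" "Suc (list_pos xs y) < length (a # xs)"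
    using list_pos_spec[of xs y] assms by auto
  then show ?thesis using list_pos_nth[of "a # xs" "Suc (list_pos xs y)"] assms(1) by simp
qed

lemma list_sign_Cons:
  assumes "reordering xs ys" "a \<notin> set xs"
  shows "list_sign (a # xs) (a # ys) = list_sign xs ys"
proof -
  have l: "length xs = length ys" using assms reordering_length by auto
  have lp: "reordering (a # xs) (a # ys)" using assms unfolding reordering_def by auto
  have "reorder_perm (a # xs) (a # ys) = map_permutation {..<length xs} Suc (reorder_perm xs ys)"
  proof
    fix i
    show "reorder_perm (a # xs) (a # ys) i = map_permutation {..<length xs} Suc (reorder_perm xs ys) i"
    proof (cases i)
      case 0
      have "list_pos (a # xs) a = 0" using list_pos_nth[of "a # xs" 0] assms unfolding reordering_def by auto
      then show ?thesis using 0 by (auto simp: reorder_perm_def map_permutation_def restrict_id_def)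
    next
      case (Suc j)
      show ?thesis
      proof (cases "j < length xs")
        case True
        have "ys ! j \<in> set xs" using True l assms unfolding reordering_def by (metis nth_mem)
        then have "list_pos (a # xs) (ys ! j) = Suc (list_pos xs (ys ! j))"
          using assms by (intro list_pos_Cons) (auto simp: reordering_def)
        moreover have "map_permutation {..<length xs} Suc (reorder_perm xs ys) (Suc j) = Suc (reorder_perm xs ys j)"
          using True by (intro map_permutation_apply) auto
        ultimately show ?thesis using Suc True by (simp add: reorder_perm_def)
      next
        case False
        then have "Suc j \<notin> Suc ` {..<length xs}" by auto
        then show ?thesis using Suc False by (simp add: reorder_perm_def map_permutation_def restrict_id_def)
      qed
    qed
  qed
  then show ?thesis using lp assms
    by (simp add: list_sign_reorder_perm sign_map_permutation[OF _ reorder_perm_permutes])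
qed

lemma list_sign_swap:
  assumes "distinct (a # b # xs)"
  shows "list_sign (a # b # xs) (b # a # xs) = -1"
proof -
  have lp: "reordering (a # b # xs) (b # a # xs)" using assms unfolding reordering_def by auto
  have eq: "reorder_perm (a # b # xs) (b # a # xs) = Transposition.transpose 0 1"
  proof
    fix i show "reorder_perm (a # b # xs) (b # a # xs) i = Transposition.transpose 0 1 i"
    proof -
      consider "i = 0" | "i = 1" | "i \<ge> 2" by linarith
      then show ?thesis
      proof cases
        case 1
        have "list_pos (a # b # xs) b = 1" using list_pos_nth[OF assms, of 1] by simp
        then show ?thesis using 1 by (simp add: reorder_perm_def transpose_def)
      next
        case 2
        have "list_pos (a # b # xs) a = 0" using list_pos_nth[OF assms, of 0] by simp
        then show ?thesis using 2 by (simp add: reorder_perm_def transpose_def)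
      next
        case 3
        then obtain k where k: "i = Suc (Suc k)" by (metis add_2_eq_Suc le_Suc_ex)
        show ?thesis
        proof (cases "i < length (a # b # xs)")
          case True
          have "list_pos (a # b # xs) ((a # b # xs) ! i) = i" by (rule list_pos_nth[OF assms True])
          then have "list_pos (a # b # xs) (xs ! k) = i" using k by simp
          then show ?thesis using k True by (simp add: reorder_perm_def transpose_def)
        qed (use k in \<open>simp add: reorder_perm_def transpose_def\<close>)
      qed
    qed
  qed
  show ?thesis using lp by (simp add: list_sign_reorder_perm eq sign_swap_id)
qed

lemma list_sign_merge_pair:
  assumes "distinct V" "p \<in> set V" "q \<in> set V" "p \<noteq> q" "n \<notin> set V" "reordering (filter (\<lambda>u. u \<noteq> p \<and> u \<noteq> q) V) L"
  shows "list_sign V (p # q # filter (\<lambda>u. u \<noteq> p \<and> u \<noteq> q) V) * list_sign (n # filter (\<lambda>u. u \<noteq> p \<and> u \<noteq> q) V) (n # L)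
       = list_sign V (p # q # L)"
proof -
  let ?r = "filter (\<lambda>u. u \<noteq> p \<and> u \<noteq> q) V"
  have sr: "set ?r = set V - {p, q}" by auto
  have l1: "reordering V (p # q # ?r)" unfolding reordering_def using assms(1-4) by auto
  have nr: "n \<notin> set ?r" using assms(5) by auto
  have l2: "reordering (p # q # ?r) (p # q # L)"
    using assms(6) assms(4) unfolding reordering_def by auto
  have "list_sign (n # ?r) (n # L) = list_sign ?r L" by (rule list_sign_Cons[OF assms(6) nr])
  also have "\<dots> = list_sign (q # ?r) (q # L)"
    by (rule list_sign_Cons[symmetric]) (use assms(6) in auto)
  also have "\<dots> = list_sign (p # q # ?r) (p # q # L)"
    by (rule list_sign_Cons[symmetric]) (use assms(4,6) l2 in \<open>auto simp: reordering_def\<close>)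
  finally have "list_sign (n # ?r) (n # L) = list_sign (p # q # ?r) (p # q # L)" .
  then show ?thesis using list_sign_trans[OF l1 l2] by simp
qed

lemma list_sign_rotate3:
  assumes "distinct (n # a # b # R)"
  shows "list_sign (n # a # b # R) (a # b # n # R) = 1"
proof -
  have l1: "reordering (n # a # b # R) (a # n # b # R)" using assms unfolding reordering_def by auto
  have l2: "reordering (a # n # b # R) (a # b # n # R)" using assms unfolding reordering_def by auto
  have s1: "list_sign (n # a # b # R) (a # n # b # R) = -1" by (rule list_sign_swap[OF assms])
  have "list_sign (a # n # b # R) (a # b # n # R) = list_sign (n # b # R) (b # n # R)"
    by (rule list_sign_Cons) (use assms in \<open>auto simp: reordering_def\<close>)
  also have "\<dots> = -1" by (rule list_sign_swap) (use assms in auto)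
  finally show ?thesis using list_sign_trans[OF l1 l2] s1 by simp
qed

lemma list_sign_swap_pairs:
  assumes "distinct (a # b # c # d # R)"
  shows "list_sign (a # b # c # d # R) (c # d # a # b # R) = 1"
proof -
  have l1: "reordering (a # b # c # d # R) (a # c # d # b # R)" using assms unfolding reordering_def by auto
  have l2: "reordering (a # c # d # b # R) (c # d # a # b # R)" using assms unfolding reordering_def by auto
  have "list_sign (a # b # c # d # R) (a # c # d # b # R) = list_sign (b # c # d # R) (c # d # b # R)"
    by (rule list_sign_Cons) (use assms in \<open>auto simp: reordering_def\<close>)
  also have "\<dots> = 1" by (rule list_sign_rotate3) (use assms in auto)
  finally have a: "list_sign (a # b # c # d # R) (a # c # d # b # R) = 1" .
  have b: "list_sign (a # c # d # b # R) (c # d # a # b # R) = 1" by (rule list_sign_rotate3) (use assms in auto)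
  show ?thesis using list_sign_trans[OF l1 l2] a b by simp
qed

lemma list_sign_swap_2_3:
  assumes "distinct (a # b # c # R)"
  shows "list_sign (a # b # c # R) (a # c # b # R) = -1"
proof -
  have "list_sign (a # b # c # R) (a # c # b # R) = list_sign (b # c # R) (c # b # R)"
    by (rule list_sign_Cons) (use assms in \<open>auto simp: reordering_def\<close>)
  also have "\<dots> = -1" by (rule list_sign_swap) (use assms in auto)
  finally show ?thesis .
qed


lemma list_sign_swap_reordering:
  assumes "reordering V (a # b # R)"
  shows "list_sign V (b # a # R) = - list_sign V (a # b # R)"
proof -
  have d: "distinct (a # b # R)" using assms unfolding reordering_def by simp
  then have "reordering (a # b # R) (b # a # R)" unfolding reordering_def by auto
  from list_sign_trans[OF assms this] show ?thesis using list_sign_swap[OF d] by simp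
qed

lemma list_sign_swap_2_3_reordering:
  assumes "reordering V (a # b # c # R)"
  shows "list_sign V (a # c # b # R) = - list_sign V (a # b # c # R)"
proof -
  have d: "distinct (a # b # c # R)" using assms unfolding reordering_def by simp
  then have "reordering (a # b # c # R) (a # c # b # R)" unfolding reordering_def by auto
  from list_sign_trans[OF assms this] show ?thesis using list_sign_swap_2_3[OF d] by simp
qed

lemma list_sign_swap_pairs_reordering:
  assumes "reordering V (a # b # c # d # R)"
  shows "list_sign V (c # d # a # b # R) = list_sign V (a # b # c # d # R)"
proof -
  have d: "distinct (a # b # c # d # R)" using assms unfolding reordering_def by simp
  then have "reordering (a # b # c # d # R) (c # d # a # b # R)" unfolding reordering_def by auto
  from list_sign_trans[OF assms this] show ?thesis using list_sign_swap_pairs[OF d] by simp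
qed

lemma list_sign_merge_two_pairs:
  assumes "distinct V" "p \<in> set V" "q \<in> set V" "p' \<in> set V" "q' \<in> set V" "n \<notin> set V"
    and "distinct [p, q, p', q']"
  shows "list_sign V (p # q # filter (\<lambda>u. u \<noteq> p \<and> u \<noteq> q) V)
       * list_sign (n # filter (\<lambda>u. u \<noteq> p \<and> u \<noteq> q) V) (p' # q' # n # filter (\<lambda>u. u \<notin> {p, q, p', q'}) V)
       = list_sign V (p # q # p' # q' # filter (\<lambda>u. u \<notin> {p, q, p', q'}) V)"
proof -
  let ?r = "filter (\<lambda>u. u \<noteq> p \<and> u \<noteq> q) V"
  let ?R = "filter (\<lambda>u. u \<notin> {p, q, p', q'}) V"
  have dL: "distinct (n # p' # q' # ?R)" using assms by auto
  have lr: "reordering ?r (p' # q' # ?R)" using assms unfolding reordering_def by auto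
  have la: "reordering (n # ?r) (n # p' # q' # ?R)" using lr assms unfolding reordering_def by auto
  have lb: "reordering (n # p' # q' # ?R) (p' # q' # n # ?R)" using dL unfolding reordering_def by auto
  have "list_sign (n # ?r) (p' # q' # n # ?R) = list_sign (n # ?r) (n # p' # q' # ?R)"
    using list_sign_trans[OF la lb] list_sign_rotate3[OF dL] by simp
  moreover have "list_sign V (p # q # ?r) * list_sign (n # ?r) (n # p' # q' # ?R) = list_sign V (p # q # p' # q' # ?R)"
    by (rule list_sign_merge_pair) (use assms lr in auto)
  ultimately show ?thesis by simp
qed

lemma list_sign_merge_adjacent_pairs:
  assumes "distinct V" "p \<in> set V" "q \<in> set V" "q' \<in> set V" "n \<notin> set V"
    and "distinct [p, q, q']"
  shows "list_sign V (p # q # filter (\<lambda>u. u \<noteq> p \<and> u \<noteq> q) V)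
       * list_sign (n # filter (\<lambda>u. u \<noteq> p \<and> u \<noteq> q) V) (n # q' # filter (\<lambda>u. u \<notin> {p, q, q'}) V)
       = list_sign V (p # q # q' # filter (\<lambda>u. u \<notin> {p, q, q'}) V)"
  by (rule list_sign_merge_pair) (use assms in \<open>auto simp: reordering_def\<close>)

definition vertex_of :: "'h set list \<Rightarrow> 'h \<Rightarrow> 'h set" where
  "vertex_of V h = (THE v. v \<in> set V \<and> h \<in> v)"

lemma vertex_of_eq: "disjoint (set V) \<Longrightarrow> u \<in> set V \<Longrightarrow> h \<in> u \<Longrightarrow> vertex_of V h = u"
  unfolding vertex_of_def pairwise_def disjnt_def by (rule the_equality) auto

lemma vertex_of_in:
  "disjoint (set V) \<Longrightarrow> h \<in> hedges V \<Longrightarrow> vertex_of V h \<in> set V \<and> h \<in> vertex_of V h"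
  unfolding hedges_def using vertex_of_eq by fastforce

lemma ograph_wf_iff:
  "ograph_wf Op (V, \<iota>, T, c) \<longleftrightarrow>
     distinct V \<and> (\<forall>v\<in>set V. finite v \<and> 2 \<le> card v) \<and> disjoint (set V) \<and>
     (\<forall>h\<in>hedges V. \<iota> h \<in> hedges V \<and> \<iota> h \<noteq> h \<and> \<iota> (\<iota> h) = h) \<and>
     (\<forall>h. h \<notin> hedges V \<longrightarrow> \<iota> h = h) \<and>
     T \<subseteq> hedges V \<and> (\<forall>h\<in>hedges V. h \<in> T \<longleftrightarrow> \<iota> h \<notin> T) \<and>
     (\<forall>v\<in>set V. c v \<in> Op v) \<and> (\<forall>u. u \<notin> set V \<longrightarrow> c u = 0)"
  unfolding ograph_wf_def pairwise_def disjnt_def by simp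

locale ograph =
  fixes Op :: "'h set \<Rightarrow> 'v::real_vector set" and V \<iota> T c
  assumes wf: "ograph_wf Op (V, \<iota>, T, c)"
begin

lemma ograph_wfD:
  shows vertices_distinct: "distinct V"
    and vertex_finite_card: "v \<in> set V \<Longrightarrow> finite v \<and> 2 \<le> card v"
    and vertices_disjoint: "disjoint (set V)"
    and inv_hedges: "h \<in> hedges V \<Longrightarrow> \<iota> h \<in> hedges V"
    and inv_neq: "h \<in> hedges V \<Longrightarrow> \<iota> h \<noteq> h"
    and inv_off: "h \<notin> hedges V \<Longrightarrow> \<iota> h = h"
    and tails_hedges: "T \<subseteq> hedges V"
    and tail_iff: "h \<in> hedges V \<Longrightarrow> h \<in> T \<longleftrightarrow> \<iota> h \<notin> T"
    and colour_in: "v \<in> set V \<Longrightarrow> c v \<in> Op v"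
    and colour_off: "u \<notin> set V \<Longrightarrow> c u = 0"
  using wf unfolding ograph_wf_iff by blast+

lemma inv_inv [simp]: "\<iota> (\<iota> h) = h"
  using wf unfolding ograph_wf_iff by (cases "h \<in> hedges V") auto

lemma inv_inj [simp]: "\<iota> a = \<iota> b \<longleftrightarrow> a = b"
  by (metis inv_inv)

lemma inv_eq_iff: "\<iota> a = b \<longleftrightarrow> a = \<iota> b"
  by auto

lemma vertices_disjointD: "u \<in> set V \<Longrightarrow> v \<in> set V \<Longrightarrow> u \<noteq> v \<Longrightarrow> u \<inter> v = {}"
  using vertices_disjoint unfolding pairwise_def disjnt_def by blast

lemma tailD:
  assumes "t \<in> T"
  shows "\<iota> t \<notin> T" "t \<in> hedges V" "\<iota> t \<in> hedges V" "\<iota> t \<noteq> t"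
  using assms tails_hedges tail_iff inv_hedges inv_neq by blast+

lemma finite_hedges: "finite (hedges V)"
  using vertex_finite_card unfolding hedges_def by auto

lemma finite_tails: "finite T"
  using finite_hedges tails_hedges by (rule finite_subset[rotated])

lemma ograph_retail:
  assumes "T' \<subseteq> hedges V" "\<forall>h\<in>hedges V. h \<in> T' \<longleftrightarrow> \<iota> h \<notin> T'"
  shows "ograph_wf Op (V, \<iota>, T', c)"
  using wf assms unfolding ograph_wf_iff by blast

lemma ograph_reverse_edge:
  assumes "t \<in> T"
  shows "ograph_wf Op (V, \<iota>, T - {t} \<union> {\<iota> t}, c)"
proof (rule ograph_retail)
  show "T - {t} \<union> {\<iota> t} \<subseteq> hedges V" using tails_hedges tailD[OF assms] by auto
  show "\<forall>h\<in>hedges V. h \<in> T - {t} \<union> {\<iota> t} \<longleftrightarrow> \<iota> h \<notin> T - {t} \<union> {\<iota> t}"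
  proof
    fix h assume h: "h \<in> hedges V"
    consider "h = t" | "h = \<iota> t" | "h \<noteq> t" "\<iota> h \<noteq> t" by force
    then show "h \<in> T - {t} \<union> {\<iota> t} \<longleftrightarrow> \<iota> h \<notin> T - {t} \<union> {\<iota> t}"
      by cases (use tail_iff[OF h] tailD[OF assms] in auto)
  qed
qed

end

section \<open>Contraction of an edge\<close>

lemma mating_in:
  assumes "cyclic_operad Op cmp ren un"
    and "finite S" "finite T" "S \<inter> T = {}" "x \<in> S" "y \<in> T" "a \<in> Op S" "b \<in> Op T"
  shows "cmp S x T y a b \<in> Op ((S - {x}) \<union> (T - {y}))"
proof -
  have "\<forall>S T x y a b. finite S \<and> finite T \<and> S \<inter> T = {} \<and> x \<in> S \<and> y \<in> T \<and> a \<in> Op S \<and> b \<in> Op T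
        \<longrightarrow> cmp S x T y a b \<in> Op ((S - {x}) \<union> (T - {y}))"
    using assms(1) unfolding cyclic_operad_def by (elim conjE) assumption
  then show ?thesis using assms(2-) by blast
qed

lemma mating_comm:
  assumes "cyclic_operad Op cmp ren un"
    and "finite S" "finite T" "S \<inter> T = {}" "x \<in> S" "y \<in> T" "a \<in> Op S" "b \<in> Op T"
  shows "cmp S x T y a b = cmp T y S x b a"
proof -
  have "\<forall>S T x y a b. finite S \<and> finite T \<and> S \<inter> T = {} \<and> x \<in> S \<and> y \<in> T \<and> a \<in> Op S \<and> b \<in> Op T
        \<longrightarrow> cmp S x T y a b = cmp T y S x b a"
    using assms(1) unfolding cyclic_operad_def by (elim conjE) assumption
  then show ?thesis using assms(2-) by blast
qed

lemma mating_assoc: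
  assumes "cyclic_operad Op cmp ren un"
    and "finite S" "finite T" "finite U" "S \<inter> T = {}" "S \<inter> U = {}" "T \<inter> U = {}"
    and "x \<in> S" "y \<in> T" "z \<in> T" "y \<noteq> z" "w \<in> U" "a \<in> Op S" "b \<in> Op T" "c \<in> Op U"
  shows "cmp ((S - {x}) \<union> (T - {y})) z U w (cmp S x T y a b) c
       = cmp S x ((T - {z}) \<union> (U - {w})) y a (cmp T z U w b c)"
proof -
  have "\<forall>S T U x y z w a b c. finite S \<and> finite T \<and> finite U \<and>
        S \<inter> T = {} \<and> S \<inter> U = {} \<and> T \<inter> U = {} \<and>
        x \<in> S \<and> y \<in> T \<and> z \<in> T \<and> y \<noteq> z \<and> w \<in> U \<and> a \<in> Op S \<and> b \<in> Op T \<and> c \<in> Op U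
        \<longrightarrow> cmp ((S - {x}) \<union> (T - {y})) z U w (cmp S x T y a b) c
            = cmp S x ((T - {z}) \<union> (U - {w})) y a (cmp T z U w b c)"
    using assms(1) unfolding cyclic_operad_def by (elim conjE) assumption
  then show ?thesis using assms(2-) by blast
qed

definition is_loop :: "('h, 'v) ograph \<Rightarrow> 'h \<Rightarrow> bool" where
  "is_loop X t = (case X of (V, \<iota>, T, c) \<Rightarrow> vertex_of V t = vertex_of V (\<iota> t))"

definition merged_vertex :: "'h set list \<Rightarrow> ('h \<Rightarrow> 'h) \<Rightarrow> 'h \<Rightarrow> 'h set" where
  "merged_vertex V \<iota> t = (vertex_of V t \<union> vertex_of V (\<iota> t)) - {t, \<iota> t}"

definition other_vertices :: "'h set list \<Rightarrow> ('h \<Rightarrow> 'h) \<Rightarrow> 'h \<Rightarrow> 'h set list" where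
  "other_vertices V \<iota> t = filter (\<lambda>u. u \<noteq> vertex_of V t \<and> u \<noteq> vertex_of V (\<iota> t)) V"

definition contracted :: "('h set \<Rightarrow> 'h \<Rightarrow> 'h set \<Rightarrow> 'h \<Rightarrow> 'v \<Rightarrow> 'v \<Rightarrow> 'v)
    \<Rightarrow> ('h, 'v::real_vector) ograph \<Rightarrow> 'h \<Rightarrow> ('h, 'v) ograph" where
  "contracted cmp X t = (case X of (V, \<iota>, T, c) \<Rightarrow>
     (merged_vertex V \<iota> t # other_vertices V \<iota> t, (\<lambda>h. if h = t \<or> h = \<iota> t then h else \<iota> h), T - {t},
      (\<lambda>u. if u = merged_vertex V \<iota> t
            then cmp (vertex_of V t) t (vertex_of V (\<iota> t)) (\<iota> t) (c (vertex_of V t)) (c (vertex_of V (\<iota> t)))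
            else if u \<in> set (other_vertices V \<iota> t) then c u else 0)))"

definition contract_sign :: "('h, 'v) ograph \<Rightarrow> 'h \<Rightarrow> real" where
  "contract_sign X t = (case X of (V, \<iota>, T, c) \<Rightarrow>
     list_sign V (vertex_of V t # vertex_of V (\<iota> t) # other_vertices V \<iota> t))"

lemma contract_eq:
  "contract cmp X t = (if is_loop X t then 0 else fscale (contract_sign X t) (gen (contracted cmp X t)))"
  unfolding contract_def is_loop_def contract_sign_def contracted_def merged_vertex_def
    other_vertices_def vertex_of_def
  by (cases X) (simp add: Let_def zero_fun_def)

lemma contracted_unfold:
  "contracted cmp (V, \<iota>, T, c) t =
     (((vertex_of V t \<union> vertex_of V (\<iota> t)) - {t, \<iota> t}) # filter (\<lambda>u. u \<noteq> vertex_of V t \<and> u \<noteq> vertex_of V (\<iota> t)) V,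
      (\<lambda>h. if h = t \<or> h = \<iota> t then h else \<iota> h), T - {t},
      (\<lambda>u. if u = (vertex_of V t \<union> vertex_of V (\<iota> t)) - {t, \<iota> t}
            then cmp (vertex_of V t) t (vertex_of V (\<iota> t)) (\<iota> t) (c (vertex_of V t)) (c (vertex_of V (\<iota> t)))
            else if u \<in> set (filter (\<lambda>u. u \<noteq> vertex_of V t \<and> u \<noteq> vertex_of V (\<iota> t)) V) then c u else 0))"
  unfolding contracted_def merged_vertex_def other_vertices_def by simp

lemma contracted_tails: "\<exists>V' \<iota>' c'. contracted cmp (V, \<iota>, T, c) t = (V', \<iota>', T - {t}, c')"
  by (simp add: contracted_def)

lemma finite_supp_contract [simp]: "finite_supp (contract cmp X t)"
  by (simp add: contract_eq)

lemma finite_supp_dE [simp]: "finite_supp (dE cmp X)"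
  by (cases X) (simp add: dE_def)

context ograph
begin

context
  fixes t assumes tail: "t \<in> T" and no_loop: "vertex_of V t \<noteq> vertex_of V (\<iota> t)"
begin

lemma edge_ends:
  shows "vertex_of V t \<in> set V" "t \<in> vertex_of V t"
    and "vertex_of V (\<iota> t) \<in> set V" "\<iota> t \<in> vertex_of V (\<iota> t)"
    and "vertex_of V t \<inter> vertex_of V (\<iota> t) = {}"
proof -
  show "vertex_of V t \<in> set V" "t \<in> vertex_of V t"
    using vertex_of_in[OF vertices_disjoint tailD(2)[OF tail]] by auto
  moreover show "vertex_of V (\<iota> t) \<in> set V" "\<iota> t \<in> vertex_of V (\<iota> t)"
    using vertex_of_in[OF vertices_disjoint tailD(3)[OF tail]] by auto
  ultimately show "vertex_of V t \<inter> vertex_of V (\<iota> t) = {}"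
    using vertices_disjointD no_loop by blast
qed

lemma merged_vertex_eq: "merged_vertex V \<iota> t = (vertex_of V t - {t}) \<union> (vertex_of V (\<iota> t) - {\<iota> t})"
  using edge_ends unfolding merged_vertex_def by auto

lemma merged_vertex_finite_card: "finite (merged_vertex V \<iota> t) \<and> 2 \<le> card (merged_vertex V \<iota> t)"
proof -
  have fin: "finite (vertex_of V t)" "finite (vertex_of V (\<iota> t))"
    and card: "card (vertex_of V t) \<ge> 2" "card (vertex_of V (\<iota> t)) \<ge> 2"
    using vertex_finite_card edge_ends by auto
  have "card (merged_vertex V \<iota> t) = card (vertex_of V t - {t}) + card (vertex_of V (\<iota> t) - {\<iota> t})"
    unfolding merged_vertex_eq by (rule card_Un_disjoint) (use fin edge_ends in auto)
  then show ?thesis using fin card edge_ends by (simp add: merged_vertex_eq card_Diff_singleton)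
qed

lemma other_vertices_iff:
  "u \<in> set (other_vertices V \<iota> t) \<longleftrightarrow> u \<in> set V \<and> u \<noteq> vertex_of V t \<and> u \<noteq> vertex_of V (\<iota> t)"
  unfolding other_vertices_def by simp

lemma other_vertices_disjoint:
  "u \<in> set (other_vertices V \<iota> t) \<Longrightarrow> u \<inter> vertex_of V t = {} \<and> u \<inter> vertex_of V (\<iota> t) = {}"
  using vertices_disjointD edge_ends unfolding other_vertices_iff by blast

lemma merged_vertex_notin: "merged_vertex V \<iota> t \<notin> set V"
proof
  assume n: "merged_vertex V \<iota> t \<in> set V"
  obtain h where h: "h \<in> merged_vertex V \<iota> t"
    using merged_vertex_finite_card by fastforce
  then have "h \<in> vertex_of V t \<or> h \<in> vertex_of V (\<iota> t)" unfolding merged_vertex_def by auto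
  then have "merged_vertex V \<iota> t = vertex_of V t \<or> merged_vertex V \<iota> t = vertex_of V (\<iota> t)"
    using n edge_ends vertices_disjointD h by blast
  then show False using edge_ends unfolding merged_vertex_def by auto
qed

lemma contracted_vertices_distinct: "distinct (merged_vertex V \<iota> t # other_vertices V \<iota> t)"
  using merged_vertex_notin vertices_distinct by (simp add: other_vertices_def)

lemma contracted_vertices_disjoint: "disjoint (set (merged_vertex V \<iota> t # other_vertices V \<iota> t))"
proof -
  have "disjoint (set (other_vertices V \<iota> t))"
    using vertices_disjoint by (rule pairwise_subset) (auto simp: other_vertices_def)
  moreover have "disjnt (merged_vertex V \<iota> t) u" if "u \<in> set (other_vertices V \<iota> t)" for u
    using other_vertices_disjoint[OF that] unfolding merged_vertex_def disjnt_def by blast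
  ultimately show ?thesis
    by (auto simp: pairwise_insert disjnt_sym)
qed

lemma hedges_contracted_vertices:
  "hedges (merged_vertex V \<iota> t # other_vertices V \<iota> t) = hedges V - {t, \<iota> t}"
proof -
  have "set V = set (other_vertices V \<iota> t) \<union> {vertex_of V t, vertex_of V (\<iota> t)}"
    using edge_ends other_vertices_iff by auto
  then have "hedges V = vertex_of V t \<union> vertex_of V (\<iota> t) \<union> \<Union>(set (other_vertices V \<iota> t))"
    unfolding hedges_def by auto
  moreover have "t \<notin> \<Union>(set (other_vertices V \<iota> t))" "\<iota> t \<notin> \<Union>(set (other_vertices V \<iota> t))"
    using other_vertices_disjoint edge_ends by blast+
  ultimately show ?thesis unfolding hedges_def merged_vertex_def by (simp only: list.set) blast
qed

lemma vertex_of_contracted: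
  assumes "h \<in> hedges V - {t, \<iota> t}"
  shows "vertex_of (merged_vertex V \<iota> t # other_vertices V \<iota> t) h
       = (if vertex_of V h = vertex_of V t \<or> vertex_of V h = vertex_of V (\<iota> t)
          then merged_vertex V \<iota> t else vertex_of V h)"
proof -
  note pd = contracted_vertices_disjoint
  obtain u where u: "u \<in> set V" "h \<in> u" using assms unfolding hedges_def by auto
  have vu: "vertex_of V h = u" using vertex_of_eq[OF vertices_disjoint u] .
  show ?thesis
  proof (cases "u = vertex_of V t \<or> u = vertex_of V (\<iota> t)")
    case True
    then have "h \<in> merged_vertex V \<iota> t" using u assms unfolding merged_vertex_def by auto
    then have "vertex_of (merged_vertex V \<iota> t # other_vertices V \<iota> t) h = merged_vertex V \<iota> t"
      by (intro vertex_of_eq[OF pd]) simp_all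
    then show ?thesis using True vu by presburger
  next
    case False
    then have "u \<in> set (other_vertices V \<iota> t)" using u unfolding other_vertices_iff by auto
    then have "vertex_of (merged_vertex V \<iota> t # other_vertices V \<iota> t) h = u"
      using u by (intro vertex_of_eq[OF pd]) simp_all
    then show ?thesis using False vu by presburger
  qed
qed

lemma delete_edge:
  defines "\<iota>' \<equiv> \<lambda>h. if h = t \<or> h = \<iota> t then h else \<iota> h"
  shows "\<forall>h\<in>hedges V - {t, \<iota> t}. \<iota>' h \<in> hedges V - {t, \<iota> t} \<and> \<iota>' h \<noteq> h \<and> \<iota>' (\<iota>' h) = h"
    and "\<forall>h. h \<notin> hedges V - {t, \<iota> t} \<longrightarrow> \<iota>' h = h"
    and "T - {t} \<subseteq> hedges V - {t, \<iota> t}"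
    and "\<forall>h\<in>hedges V - {t, \<iota> t}. h \<in> T - {t} \<longleftrightarrow> \<iota>' h \<notin> T - {t}"
proof -
  have inv_other: "\<iota>' h = \<iota> h" "\<iota> h \<in> hedges V - {t, \<iota> t}" if h: "h \<in> hedges V - {t, \<iota> t}" for h
  proof -
    show "\<iota>' h = \<iota> h" using h unfolding \<iota>'_def by auto
    have "\<iota> h \<noteq> t" using h inv_inv[of h] by (metis DiffD2 insertCI)
    moreover have "\<iota> h \<noteq> \<iota> t" using h by simp
    ultimately show "\<iota> h \<in> hedges V - {t, \<iota> t}" using h inv_hedges by blast
  qed
  show "\<forall>h\<in>hedges V - {t, \<iota> t}. \<iota>' h \<in> hedges V - {t, \<iota> t} \<and> \<iota>' h \<noteq> h \<and> \<iota>' (\<iota>' h) = h"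
  proof
    fix h assume h: "h \<in> hedges V - {t, \<iota> t}"
    show "\<iota>' h \<in> hedges V - {t, \<iota> t} \<and> \<iota>' h \<noteq> h \<and> \<iota>' (\<iota>' h) = h"
      using inv_other[OF h] inv_other(1)[OF inv_other(2)[OF h]] inv_neq[of h] h by simp
  qed
  show "\<forall>h. h \<notin> hedges V - {t, \<iota> t} \<longrightarrow> \<iota>' h = h"
    using inv_off unfolding \<iota>'_def by auto
  show "T - {t} \<subseteq> hedges V - {t, \<iota> t}"
    using tails_hedges tailD(1)[OF tail] by blast
  show "\<forall>h\<in>hedges V - {t, \<iota> t}. h \<in> T - {t} \<longleftrightarrow> \<iota>' h \<notin> T - {t}"
  proof
    fix h assume h: "h \<in> hedges V - {t, \<iota> t}"
    show "h \<in> T - {t} \<longleftrightarrow> \<iota>' h \<notin> T - {t}"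
      using inv_other[OF h] tail_iff[of h] h by auto
  qed
qed

lemma ograph_contracted:
  assumes "cyclic_operad Op cmp ren un"
  shows "ograph_wf Op (contracted cmp (V, \<iota>, T, c) t)"
proof -
  let ?n = "merged_vertex V \<iota> t" and ?r = "other_vertices V \<iota> t"
  let ?a = "cmp (vertex_of V t) t (vertex_of V (\<iota> t)) (\<iota> t) (c (vertex_of V t)) (c (vertex_of V (\<iota> t)))"
  have "?a \<in> Op ?n"
    unfolding merged_vertex_eq
    by (rule mating_in[OF assms]) (use edge_ends vertex_finite_card colour_in in auto)
  moreover have "finite u \<and> 2 \<le> card u \<and> c u \<in> Op u \<and> u \<noteq> ?n" if "u \<in> set ?r" for u
    using that vertex_finite_card colour_in merged_vertex_notin unfolding other_vertices_iff by blast
  ultimately have "\<forall>v\<in>set (?n # ?r). finite v \<and> 2 \<le> card v"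
    and "\<forall>v\<in>set (?n # ?r). (if v = ?n then ?a else if v \<in> set ?r then c v else 0) \<in> Op v"
    and "\<forall>u. u \<notin> set (?n # ?r) \<longrightarrow> (if u = ?n then ?a else if u \<in> set ?r then c u else 0) = 0"
    using merged_vertex_finite_card by auto
  then show ?thesis
    unfolding contracted_def ograph_wf_iff prod.case hedges_contracted_vertices
    using contracted_vertices_distinct contracted_vertices_disjoint delete_edge
    by (intro conjI) assumption+
qed

end

end

definition reglue_pairs :: "'h set list \<Rightarrow> ('h \<Rightarrow> 'h) \<Rightarrow> ('h \<times> 'h) set" where
  "reglue_pairs V \<iota> = {(x, y). x \<in> hedges V \<and> y \<in> hedges V \<and> x \<noteq> y \<and> x \<noteq> \<iota> y}"

definition reglued :: "('h, 'v) ograph \<Rightarrow> 'h \<Rightarrow> 'h \<Rightarrow> ('h, 'v) ograph" where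
  "reglued X x y = snd (reglue X x y)"

definition reglue_sign :: "('h, 'v) ograph \<Rightarrow> 'h \<Rightarrow> 'h \<Rightarrow> real" where
  "reglue_sign X x y = fst (reglue X x y)"

definition reglued_inv :: "('h \<Rightarrow> 'h) \<Rightarrow> 'h \<Rightarrow> 'h \<Rightarrow> 'h \<Rightarrow> 'h" where
  "reglued_inv \<iota> x y = (\<lambda>h. if h = x then y else if h = y then x else if h = \<iota> x then \<iota> y
                            else if h = \<iota> y then \<iota> x else \<iota> h)"

lemma reglued_eq:
  "reglued (V, \<iota>, T, c) x y = (V, reglued_inv \<iota> x y, (T - {x, \<iota> x, y, \<iota> y}) \<union> {\<iota> x, y}, c)"
  by (simp add: reglued_def reglue_def reglued_inv_def)

lemma reglue_sign_eq: "reglue_sign (V, \<iota>, T, c) x y = (-1) ^ card ({x, \<iota> y} - T)"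
  by (simp add: reglue_sign_def reglue_def)

definition bool_sign :: "bool \<Rightarrow> real" where
  "bool_sign P = (if P then 1 else -1)"

lemma reglue_sign_bool_sign:
  "x \<noteq> \<iota> y \<Longrightarrow> reglue_sign (V, \<iota>, T, c) x y = bool_sign (x \<in> T) * bool_sign (\<iota> y \<in> T)"
  by (cases "x \<in> T"; cases "\<iota> y \<in> T") (simp_all add: reglue_sign_eq bool_sign_def insert_Diff_if)

lemma dH_eq:
  "dH cmp (V, \<iota>, T, c) = (\<Sum>(x, y)\<in>reglue_pairs V \<iota>.
     fscale (reglue_sign (V, \<iota>, T, c) x y) (contract cmp (reglued (V, \<iota>, T, c) x y) y))"
  by (simp add: dH_def reglue_pairs_def reglue_sign_def reglued_def)

lemma finite_supp_dH [simp]: "finite_supp (dH cmp X)"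
  by (cases X) (simp add: dH_eq case_prod_beta)

lemma (in ograph) finite_reglue_pairs: "finite (reglue_pairs V \<iota>)"
  unfolding reglue_pairs_def
  by (rule finite_subset[of _ "hedges V \<times> hedges V"]) (auto simp: finite_hedges)

context ograph
begin

context
  fixes x y assumes x: "x \<in> hedges V" and y: "y \<in> hedges V" and xy: "x \<noteq> y" "x \<noteq> \<iota> y"
begin

lemma reglued_halfedges_distinct: "x \<noteq> \<iota> x" "y \<noteq> \<iota> y" "\<iota> x \<noteq> y" "\<iota> x \<noteq> \<iota> y"
  using inv_neq[OF x] inv_neq[OF y] xy by (auto simp: inv_eq_iff)

lemma reglued_inv_other: "h \<notin> {x, y, \<iota> x, \<iota> y} \<Longrightarrow> reglued_inv \<iota> x y h = \<iota> h"
  by (auto simp: reglued_inv_def)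

lemma reglued_inv_vals:
  "reglued_inv \<iota> x y x = y" "reglued_inv \<iota> x y y = x"
  "reglued_inv \<iota> x y (\<iota> x) = \<iota> y" "reglued_inv \<iota> x y (\<iota> y) = \<iota> x"
  using reglued_halfedges_distinct xy by (auto simp: reglued_inv_def)

lemma inv_other: "h \<notin> {x, y, \<iota> x, \<iota> y} \<Longrightarrow> \<iota> h \<notin> {x, y, \<iota> x, \<iota> y}"
  by (auto simp: inv_eq_iff)

lemma reglued_inv_involution:
  shows "h \<in> hedges V \<Longrightarrow> reglued_inv \<iota> x y h \<in> hedges V \<and> reglued_inv \<iota> x y h \<noteq> h
      \<and> reglued_inv \<iota> x y (reglued_inv \<iota> x y h) = h"
    and "h \<notin> hedges V \<Longrightarrow> reglued_inv \<iota> x y h = h"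
proof -
  note fd = reglued_halfedges_distinct
  show "reglued_inv \<iota> x y h \<in> hedges V \<and> reglued_inv \<iota> x y h \<noteq> h
      \<and> reglued_inv \<iota> x y (reglued_inv \<iota> x y h) = h" if h: "h \<in> hedges V"
  proof (cases "h \<in> {x, y, \<iota> x, \<iota> y}")
    case True
    then show ?thesis using reglued_inv_vals fd xy x y inv_hedges by auto
  next
    case False
    show ?thesis
      unfolding reglued_inv_other[OF False] reglued_inv_other[OF inv_other[OF False]]
      using inv_hedges inv_neq h by auto
  qed
  show "reglued_inv \<iota> x y h = h" if h: "h \<notin> hedges V"
  proof -
    have "h \<notin> {x, y, \<iota> x, \<iota> y}" using h x y inv_hedges by auto
    then show ?thesis using reglued_inv_other inv_off[OF h] by simp
  qed
qed

lemma ograph_reglued: "ograph_wf Op (reglued (V, \<iota>, T, c) x y)"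
proof -
  let ?T = "(T - {x, \<iota> x, y, \<iota> y}) \<union> {\<iota> x, y}"
  have tails: "h \<in> ?T \<longleftrightarrow> reglued_inv \<iota> x y h \<notin> ?T" if h: "h \<in> hedges V" for h
  proof (cases "h \<in> {x, y, \<iota> x, \<iota> y}")
    case True
    then show ?thesis using reglued_inv_vals reglued_halfedges_distinct xy by auto
  next
    case False
    then show ?thesis
      unfolding reglued_inv_other[OF False] using tail_iff[OF h] inv_other[OF False] by blast
  qed
  have "?T \<subseteq> hedges V" using tails_hedges x y inv_hedges by auto
  then show ?thesis
    unfolding reglued_eq ograph_wf_iff
    using vertices_distinct vertex_finite_card vertices_disjoint colour_in colour_off
      reglued_inv_involution tails
    by (intro conjI) blast+
qed

end

end

context ograph
begin

context
  fixes t x y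
  assumes tail: "t \<in> T"
    and x: "x \<in> hedges V - {t, \<iota> t}" and y: "y \<in> hedges V - {t, \<iota> t}" and xy: "x \<noteq> y" "x \<noteq> \<iota> y"
begin

lemma edge_not_reglued: "t \<notin> {x, y, \<iota> x, \<iota> y}" "\<iota> t \<notin> {x, y, \<iota> x, \<iota> y}"
  using x y by (auto simp: inv_eq_iff)

lemma reglued_inv_tail: "reglued_inv \<iota> x y t = \<iota> t" "reglued_inv \<iota> x y (\<iota> t) = t"
  using edge_not_reglued unfolding reglued_inv_def by auto

lemma reglued_contracted:
  "reglued (contracted cmp (V, \<iota>, T, c) t) x y = contracted cmp (reglued (V, \<iota>, T, c) x y) t"
proof -
  let ?\<iota>' = "\<lambda>h. if h = t \<or> h = \<iota> t then h else \<iota> h"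
  have ix: "?\<iota>' x = \<iota> x" "?\<iota>' y = \<iota> y" using x y by auto
  have inv: "reglued_inv ?\<iota>' x y
      = (\<lambda>h. if h = t \<or> h = reglued_inv \<iota> x y t then h else reglued_inv \<iota> x y h)"
    using edge_not_reglued ix reglued_inv_tail by (auto simp: reglued_inv_def fun_eq_iff)
  have tails: "(T - {t} - {x, ?\<iota>' x, y, ?\<iota>' y}) \<union> {?\<iota>' x, y}
      = ((T - {x, \<iota> x, y, \<iota> y}) \<union> {\<iota> x, y}) - {t}"
    unfolding ix using edge_not_reglued by auto
  show ?thesis
    unfolding reglued_eq contracted_unfold reglued_inv_tail inv tails by simp
qed

lemma reglue_sign_contracted:
  "reglue_sign (contracted cmp (V, \<iota>, T, c) t) x y = reglue_sign (V, \<iota>, T, c) x y"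
proof -
  have "{x, (if y = t \<or> y = \<iota> t then y else \<iota> y)} - (T - {t}) = {x, \<iota> y} - T"
    using x y edge_not_reglued by auto
  then show ?thesis by (simp add: contracted_unfold reglue_sign_eq)
qed

lemma is_loop_reglued: "is_loop (reglued (V, \<iota>, T, c) x y) t = is_loop (V, \<iota>, T, c) t"
  by (simp add: reglued_eq is_loop_def reglued_inv_tail)

lemma contract_sign_reglued: "contract_sign (reglued (V, \<iota>, T, c) x y) t = contract_sign (V, \<iota>, T, c) t"
  by (simp add: reglued_eq contract_sign_def other_vertices_def reglued_inv_tail)

end

end

definition contract2 :: "('h set \<Rightarrow> 'h \<Rightarrow> 'h set \<Rightarrow> 'h \<Rightarrow> 'v \<Rightarrow> 'v \<Rightarrow> 'v)
    \<Rightarrow> ('h, 'v::real_vector) ograph \<Rightarrow> 'h \<Rightarrow> 'h \<Rightarrow> ('h, 'v) ograph \<Rightarrow> real" where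
  "contract2 cmp X t s = lin_ext (\<lambda>g. contract cmp g s) (contract cmp X t)"

lemma contract2_eq:
  "contract2 cmp X t s
     = (if is_loop X t then 0 else fscale (contract_sign X t) (contract cmp (contracted cmp X t) s))"
  by (simp add: contract2_def contract_eq lin_ext_fscale)

definition avoiding_pairs :: "'h set list \<Rightarrow> ('h \<Rightarrow> 'h) \<Rightarrow> 'h \<Rightarrow> ('h \<times> 'h) set" where
  "avoiding_pairs V \<iota> t =
     {(x, y). x \<in> hedges V - {t, \<iota> t} \<and> y \<in> hedges V - {t, \<iota> t} \<and> x \<noteq> y \<and> x \<noteq> \<iota> y}"

lemma (in ograph) dH_contract:
  assumes tail: "t \<in> T"
  shows "lin_ext (dH cmp) (contract cmp (V, \<iota>, T, c) t)
       = (\<Sum>(x, y)\<in>avoiding_pairs V \<iota> t.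
            fscale (reglue_sign (V, \<iota>, T, c) x y) (contract2 cmp (reglued (V, \<iota>, T, c) x y) t y))"
proof (cases "is_loop (V, \<iota>, T, c) t")
  case True
  then show ?thesis
    using is_loop_reglued[OF tail]
    by (auto simp: contract_eq contract2_eq avoiding_pairs_def case_prod_beta intro!: sum.neutral)
next
  case False
  let ?X = "(V, \<iota>, T, c)"
  have pairs: "reglue_pairs (merged_vertex V \<iota> t # other_vertices V \<iota> t) (\<lambda>h. if h = t \<or> h = \<iota> t then h else \<iota> h)
      = avoiding_pairs V \<iota> t"
    using hedges_contracted_vertices[OF tail] False
    by (auto simp: reglue_pairs_def avoiding_pairs_def is_loop_def)
  have "lin_ext (dH cmp) (contract cmp ?X t) = fscale (contract_sign ?X t) (dH cmp (contracted cmp ?X t))"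
    using False by (simp add: contract_eq lin_ext_fscale)
  also have "\<dots> = fscale (contract_sign ?X t) (\<Sum>(x, y)\<in>avoiding_pairs V \<iota> t.
      fscale (reglue_sign (contracted cmp ?X t) x y) (contract cmp (reglued (contracted cmp ?X t) x y) y))"
    by (simp add: contracted_def dH_eq pairs del: set_filter)
  also have "\<dots> = (\<Sum>(x, y)\<in>avoiding_pairs V \<iota> t.
      fscale (reglue_sign ?X x y) (contract2 cmp (reglued ?X x y) t y))"
    unfolding fscale_sum
  proof (rule sum.cong[OF refl], clarify)
    fix x y assume "(x, y) \<in> avoiding_pairs V \<iota> t"
    then have xy: "x \<in> hedges V - {t, \<iota> t}" "y \<in> hedges V - {t, \<iota> t}" "x \<noteq> y" "x \<noteq> \<iota> y"
      by (auto simp: avoiding_pairs_def)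
    show "fscale (contract_sign ?X t) (fscale (reglue_sign (contracted cmp ?X t) x y)
          (contract cmp (reglued (contracted cmp ?X t) x y) y))
        = fscale (reglue_sign ?X x y) (contract2 cmp (reglued ?X x y) t y)"
      unfolding contract2_eq is_loop_reglued[OF tail xy] contract_sign_reglued[OF tail xy]
        reglue_sign_contracted[OF tail xy] reglued_contracted[OF tail xy]
      using False by (simp add: mult.commute)
  qed
  finally show ?thesis .
qed

lemma dE_contract:
  "lin_ext (dE cmp) (contract cmp (V, \<iota>, T, c) t) = (\<Sum>s\<in>T - {t}. contract2 cmp (V, \<iota>, T, c) t s)"
proof (cases "is_loop (V, \<iota>, T, c) t")
  case True
  then show ?thesis by (simp add: contract_eq contract2_eq)
next
  case False
  obtain V' \<iota>' c' where "contracted cmp (V, \<iota>, T, c) t = (V', \<iota>', T - {t}, c')"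
    using contracted_tails[of cmp V \<iota> T c t] by blast
  then show ?thesis
    using False by (simp add: contract_eq lin_ext_fscale contract2_eq dE_def fscale_sum)
qed

section \<open>Contracting two edges\<close>

lemma og_rel_orientation:
  assumes "ograph_wf Op (V1, \<iota>, T1, c)" "ograph_wf Op (V2, \<iota>, T2, c)" "set V2 = set V1"
    and "a + b * (list_sign V1 V2 * (-1) ^ card (T1 - T2)) = 0"
  shows "fscale a (gen (V1, \<iota>, T1, c)) + fscale b (gen (V2, \<iota>, T2, c)) \<in> fspan (og_rel Op ren)"
proof -
  let ?L = "list_sign V1 V2 * (-1) ^ card (T1 - T2)"
  have "gen (V2, \<iota>, T2, c) - fscale ?L (gen (V1, \<iota>, T1, c)) \<in> og_rel Op ren"
    unfolding og_rel_def using assms(1-3) by blast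
  moreover have "fscale a (gen (V1, \<iota>, T1, c)) + fscale b (gen (V2, \<iota>, T2, c))
      = fscale b (gen (V2, \<iota>, T2, c) - fscale ?L (gen (V1, \<iota>, T1, c)))"
    using assms(4) by (simp add: fun_eq_iff algebra_simps eq_neg_iff_add_eq_0[symmetric])
  ultimately show ?thesis using fspan_fscale[OF fspan_base] by metis
qed

lemma (in ograph) contract_reverse_edge:
  assumes co: "cyclic_operad Op cmp ren un" and tail: "t \<in> T"
  shows "contract cmp (V, \<iota>, T - {t} \<union> {\<iota> t}, c) (\<iota> t) = fscale (-1) (contract cmp (V, \<iota>, T, c) t)"
proof (cases "is_loop (V, \<iota>, T, c) t")
  case True
  then show ?thesis by (simp add: contract_eq is_loop_def)
next
  case False
  define v where "v = vertex_of V t"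
  define w where "w = vertex_of V (\<iota> t)"
  have vw: "v \<in> set V" "t \<in> v" "w \<in> set V" "\<iota> t \<in> w" "v \<noteq> w" "v \<inter> w = {}"
    using edge_ends[OF tail] False by (auto simp: v_def w_def is_loop_def)
  have rest: "filter (\<lambda>u. u \<noteq> w \<and> u \<noteq> v) V = filter (\<lambda>u. u \<noteq> v \<and> u \<noteq> w) V"
    by (rule filter_cong) auto
  have "contract_sign (V, \<iota>, T - {t} \<union> {\<iota> t}, c) (\<iota> t) = - contract_sign (V, \<iota>, T, c) t"
  proof -
    let ?r = "filter (\<lambda>u. u \<noteq> v \<and> u \<noteq> w) V"
    have "reordering V (v # w # ?r)" unfolding reordering_def using vertices_distinct vw by auto
    from list_sign_swap_reordering[OF this] show ?thesis
      by (simp add: contract_sign_def other_vertices_def rest flip: v_def w_def)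
  qed
  moreover have "cmp w (\<iota> t) v t (c w) (c v) = cmp v t w (\<iota> t) (c v) (c w)"
    by (rule mating_comm[OF co]) (use vw vertex_finite_card colour_in in auto)
  then have "contracted cmp (V, \<iota>, T - {t} \<union> {\<iota> t}, c) (\<iota> t) = contracted cmp (V, \<iota>, T, c) t"
    using tailD[OF tail] unfolding contracted_unfold inv_inv v_def[symmetric] w_def[symmetric] rest
    by (auto simp: insert_commute Un_commute)
  ultimately show ?thesis
    using False by (simp add: contract_eq is_loop_def)
qed

lemma (in ograph) contract2_reverse_first:
  assumes "cyclic_operad Op cmp ren un" and "t \<in> T"
  shows "contract2 cmp (V, \<iota>, T - {t} \<union> {\<iota> t}, c) (\<iota> t) s = fscale (-1) (contract2 cmp (V, \<iota>, T, c) t s)"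
  unfolding contract2_def contract_reverse_edge[OF assms] by (simp add: lin_ext_fscale)

lemma (in ograph) contract2_reverse_second:
  assumes co: "cyclic_operad Op cmp ren un" and tail: "t \<in> T" and s: "s \<in> T" "s \<noteq> t" "s \<noteq> \<iota> t"
  shows "contract2 cmp (V, \<iota>, T - {s} \<union> {\<iota> s}, c) t (\<iota> s) = fscale (-1) (contract2 cmp (V, \<iota>, T, c) t s)"
proof (cases "is_loop (V, \<iota>, T, c) t")
  case True
  then show ?thesis by (simp add: contract2_eq is_loop_def)
next
  case False
  obtain V1 \<iota>1 c1 where C: "contracted cmp (V, \<iota>, T, c) t = (V1, \<iota>1, T - {t}, c1)"
    using contracted_tails[of cmp V \<iota> T c t] by blast
  have "\<iota>1 = (\<lambda>h. if h = t \<or> h = \<iota> t then h else \<iota> h)" using C by (simp add: contracted_unfold)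
  then have \<iota>1: "\<iota>1 s = \<iota> s" using s by simp
  have "\<iota> s \<noteq> t" using s by (auto simp: inv_eq_iff)
  then have C': "contracted cmp (V, \<iota>, T - {s} \<union> {\<iota> s}, c) t = (V1, \<iota>1, (T - {t}) - {s} \<union> {\<iota>1 s}, c1)"
    using C s(2) \<iota>1 by (auto simp: contracted_unfold)
  have "ograph Op V1 \<iota>1 (T - {t}) c1"
    using ograph_contracted[OF tail _ co] False C by (simp add: ograph.intro is_loop_def)
  then have "contract cmp (V1, \<iota>1, (T - {t}) - {s} \<union> {\<iota>1 s}, c1) (\<iota>1 s)
      = fscale (-1) (contract cmp (V1, \<iota>1, T - {t}, c1) s)"
    using s by (intro ograph.contract_reverse_edge[OF _ co]) auto
  then show ?thesis
    unfolding contract2_eq C C' using False \<iota>1 by (simp add: contract_sign_def is_loop_def)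
qed

lemma (in ograph) contract2_reorient:
  assumes co: "cyclic_operad Op cmp ren un"
    and t: "t \<in> T" and s: "s \<in> T" "s \<noteq> t" "s \<noteq> \<iota> t"
    and t': "t' \<in> {t, \<iota> t}" and s': "s' \<in> {s, \<iota> s}"
  shows "ograph_wf Op (V, \<iota>, T - {t, s} \<union> {t', s'}, c)"
    and "contract2 cmp (V, \<iota>, T, c) t s
       = fscale (bool_sign (t' = t) * bool_sign (s' = s)) (contract2 cmp (V, \<iota>, T - {t, s} \<union> {t', s'}, c) t' s')"
proof -
  have d: "t \<noteq> \<iota> s" "\<iota> t \<noteq> \<iota> s" "\<iota> t \<noteq> s" using s by (auto simp: inv_eq_iff)
  define T2 where "T2 = (if s' = s then T else T - {s} \<union> {\<iota> s})"
  have G2: "ograph Op V \<iota> T2 c" using ograph_reverse_edge[OF s(1)] wf unfolding T2_def by (simp add: ograph.intro)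
  have t2: "t \<in> T2" using t s d unfolding T2_def by auto
  have s2: "contract2 cmp (V, \<iota>, T, c) t s = fscale (bool_sign (s' = s)) (contract2 cmp (V, \<iota>, T2, c) t s')"
    using contract2_reverse_second[OF co t s] s' by (auto simp: T2_def bool_sign_def)
  define T3 where "T3 = (if t' = t then T2 else T2 - {t} \<union> {\<iota> t})"
  have wf3: "ograph_wf Op (V, \<iota>, T3, c)"
    using ograph.ograph_reverse_edge[OF G2 t2] G2 unfolding T3_def by (simp add: ograph.wf)
  have s3: "contract2 cmp (V, \<iota>, T2, c) t s' = fscale (bool_sign (t' = t)) (contract2 cmp (V, \<iota>, T3, c) t' s')"
    using ograph.contract2_reverse_first[OF G2 co t2] t' by (auto simp: T3_def bool_sign_def)
  have "T3 = T - {t, s} \<union> {t', s'}"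
    unfolding T3_def T2_def using t' s' t s d tailD(1)[OF t] tailD(1)[OF s(1)] by auto
  then show "ograph_wf Op (V, \<iota>, T - {t, s} \<union> {t', s'}, c)"
    and "contract2 cmp (V, \<iota>, T, c) t s
       = fscale (bool_sign (t' = t) * bool_sign (s' = s)) (contract2 cmp (V, \<iota>, T - {t, s} \<union> {t', s'}, c) t' s')"
    using wf3 s2 s3 by (simp_all add: mult.commute)
qed

context ograph
begin

lemma contract2_disjoint_edges:
  assumes co: "cyclic_operad Op cmp ren un"
    and t: "t \<in> T" and s: "s \<in> T" "s \<noteq> t" "s \<noteq> \<iota> t"
    and pt: "pt = vertex_of V t" and qt: "qt = vertex_of V (\<iota> t)"
    and ps: "ps = vertex_of V s" and qs: "qs = vertex_of V (\<iota> s)"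
    and no_loops: "pt \<noteq> qt" "ps \<noteq> qs" and disj: "{pt, qt} \<inter> {ps, qs} = {}"
    and R: "R = filter (\<lambda>u. u \<notin> {pt, qt, ps, qs}) V"
    and nt: "nt = (pt \<union> qt) - {t, \<iota> t}" and ns: "ns = (ps \<union> qs) - {s, \<iota> s}"
    and J: "J = (\<lambda>h. if h \<in> {t, \<iota> t, s, \<iota> s} then h else \<iota> h)"
    and C: "C = (\<lambda>u. if u = ns then cmp ps s qs (\<iota> s) (c ps) (c qs)
                else if u = nt then cmp pt t qt (\<iota> t) (c pt) (c qt) else if u \<in> set R then c u else 0)"
  shows "contract2 cmp (V, \<iota>, T, c) t s
       = fscale (list_sign V (pt # qt # ps # qs # R)) (gen (ns # nt # R, J, T - {t} - {s}, C))"
    and "ograph_wf Op (ns # nt # R, J, T - {t} - {s}, C)"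
proof -
  have nl: "vertex_of V t \<noteq> vertex_of V (\<iota> t)" using no_loops pt qt by simp
  have vt: "pt \<in> set V" "qt \<in> set V" using edge_ends[OF t nl] pt qt by auto
  have vs: "ps \<in> set V" "s \<in> ps" "qs \<in> set V" "\<iota> s \<in> qs"
    using vertex_of_in[OF vertices_disjoint tailD(2)[OF s(1)]]
      vertex_of_in[OF vertices_disjoint tailD(3)[OF s(1)]] ps qs by auto
  define rt where "rt = filter (\<lambda>u. u \<noteq> pt \<and> u \<noteq> qt) V"
  define jt where "jt = (\<lambda>h. if h = t \<or> h = \<iota> t then h else \<iota> h)"
  define ct where "ct = (\<lambda>u. if u = nt then cmp pt t qt (\<iota> t) (c pt) (c qt) else if u \<in> set rt then c u else 0)"
  have C1: "contracted cmp (V, \<iota>, T, c) t = (nt # rt, jt, T - {t}, ct)"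
    unfolding contracted_unfold rt_def jt_def ct_def nt pt qt ..
  have G1: "ograph Op (nt # rt) jt (T - {t}) ct"
    using ograph_contracted[OF t nl co] C1 by (simp add: ograph.intro)
  have nt_notin: "nt \<notin> set V" using merged_vertex_notin[OF t nl] nt pt qt by (simp add: merged_vertex_def)
  have "s \<in> hedges V - {t, \<iota> t}" "\<iota> s \<in> hedges V - {t, \<iota> t}"
    using tailD[OF s(1)] s by (auto simp: inv_eq_iff)
  then have vertex_of_s: "vertex_of (nt # rt) s = ps" "vertex_of (nt # rt) (jt s) = qs"
    using vertex_of_contracted[OF t nl] C1 disj pt qt ps qs nt s
    by (auto simp: jt_def contracted_def merged_vertex_def other_vertices_def)
  have "jt s = \<iota> s" using s by (simp add: jt_def)
  have rest: "filter (\<lambda>u. u \<noteq> ps \<and> u \<noteq> qs) (nt # rt) = nt # R"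
    using nt_notin vs unfolding rt_def R by (auto simp: filter_filter intro!: filter_cong)
  have "ns \<noteq> nt"
  proof
    assume "ns = nt"
    have "vertex_of V s \<noteq> vertex_of V (\<iota> s)" using no_loops ps qs by simp
    then have "2 \<le> card ns"
      using merged_vertex_finite_card[OF s(1)] ns ps qs by (simp add: merged_vertex_def)
    then have "ns \<noteq> {}" by auto
    moreover have "ps \<inter> pt = {}" "ps \<inter> qt = {}" "qs \<inter> pt = {}" "qs \<inter> qt = {}"
      using vertices_disjointD vt vs disj by auto
    moreover have "ns \<subseteq> ps \<union> qs" "nt \<subseteq> pt \<union> qt" unfolding ns nt by auto
    ultimately show False using \<open>ns = nt\<close> by blast
  qed
  have Jeq: "(\<lambda>h. if h = s \<or> h = jt s then h else jt h) = J"
    unfolding J \<open>jt s = \<iota> s\<close> using s by (auto simp: jt_def fun_eq_iff)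
  have "ct ps = c ps" "ct qs = c qs" using vs disj nt_notin unfolding ct_def rt_def by auto
  then have Ceq: "(\<lambda>u. if u = (ps \<union> qs) - {s, jt s} then cmp ps s qs (jt s) (ct ps) (ct qs)
        else if u \<in> set (nt # R) then ct u else 0) = C"
    unfolding C \<open>jt s = \<iota> s\<close> ns[symmetric] using nt_notin \<open>ns \<noteq> nt\<close>
    by (auto simp: ct_def R rt_def fun_eq_iff)
  have C2: "contracted cmp (nt # rt, jt, T - {t}, ct) s = (ns # nt # R, J, T - {t} - {s}, C)"
    unfolding contracted_unfold vertex_of_s rest Jeq Ceq
    by (simp add: \<open>jt s = \<iota> s\<close> ns)
  have "vertex_of (nt # rt) s \<noteq> vertex_of (nt # rt) (jt s)" using vertex_of_s no_loops by simp
  note G2 = ograph.ograph_contracted[OF G1 _ this co]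
  show "ograph_wf Op (ns # nt # R, J, T - {t} - {s}, C)"
    using G2 C2 s by simp
  have "contract_sign (V, \<iota>, T, c) t * contract_sign (nt # rt, jt, T - {t}, ct) s
      = list_sign V (pt # qt # ps # qs # R)"
    unfolding contract_sign_def prod.case vertex_of_s other_vertices_def rest
    unfolding pt[symmetric] qt[symmetric] R rt_def
    by (rule list_sign_merge_two_pairs) (use vertices_distinct vt vs nt_notin disj no_loops in auto)
  then show "contract2 cmp (V, \<iota>, T, c) t s
      = fscale (list_sign V (pt # qt # ps # qs # R)) (gen (ns # nt # R, J, T - {t} - {s}, C))"
    unfolding contract2_eq C1 contract_eq C2 using no_loops pt qt vertex_of_s
    by (simp add: is_loop_def mult.commute)
qed

lemma contract2_adjacent_edges:
  assumes co: "cyclic_operad Op cmp ren un"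
    and t: "t \<in> T" and s: "s \<in> T" "s \<noteq> t" "s \<noteq> \<iota> t"
    and pt: "P = vertex_of V t" and qt: "qt = vertex_of V (\<iota> t)"
    and ps: "P = vertex_of V s" and qs: "qs = vertex_of V (\<iota> s)"
    and distinct: "P \<noteq> qt" "P \<noteq> qs" "qt \<noteq> qs"
    and R: "R = filter (\<lambda>u. u \<notin> {P, qt, qs}) V"
    and nt: "nt = (P \<union> qt) - {t, \<iota> t}" and N: "N = (nt \<union> qs) - {s, \<iota> s}"
    and J: "J = (\<lambda>h. if h \<in> {t, \<iota> t, s, \<iota> s} then h else \<iota> h)"
    and C: "C = (\<lambda>u. if u = N then cmp nt s qs (\<iota> s) (cmp P t qt (\<iota> t) (c P) (c qt)) (c qs)
                else if u \<in> set R then c u else 0)"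
  shows "contract2 cmp (V, \<iota>, T, c) t s
       = fscale (list_sign V (P # qt # qs # R)) (gen (N # R, J, T - {t} - {s}, C))"
    and "ograph_wf Op (N # R, J, T - {t} - {s}, C)"
proof -
  have nl: "vertex_of V t \<noteq> vertex_of V (\<iota> t)" using distinct pt qt by simp
  have vt: "P \<in> set V" "qt \<in> set V" using edge_ends[OF t nl] pt qt by auto
  have vs: "qs \<in> set V" "\<iota> s \<in> qs"
    using vertex_of_in[OF vertices_disjoint tailD(3)[OF s(1)]] qs by auto
  define rt where "rt = filter (\<lambda>u. u \<noteq> P \<and> u \<noteq> qt) V"
  define jt where "jt = (\<lambda>h. if h = t \<or> h = \<iota> t then h else \<iota> h)"
  define ct where "ct = (\<lambda>u. if u = nt then cmp P t qt (\<iota> t) (c P) (c qt) else if u \<in> set rt then c u else 0)"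
  have C1: "contracted cmp (V, \<iota>, T, c) t = (nt # rt, jt, T - {t}, ct)"
    unfolding contracted_unfold rt_def jt_def ct_def nt pt qt ..
  have G1: "ograph Op (nt # rt) jt (T - {t}) ct"
    using ograph_contracted[OF t nl co] C1 by (simp add: ograph.intro)
  have nt_notin: "nt \<notin> set V" using merged_vertex_notin[OF t nl] nt pt qt by (simp add: merged_vertex_def)
  have "s \<in> hedges V - {t, \<iota> t}" "\<iota> s \<in> hedges V - {t, \<iota> t}"
    using tailD[OF s(1)] s by (auto simp: inv_eq_iff)
  then have vertex_of_s: "vertex_of (nt # rt) s = nt" "vertex_of (nt # rt) (jt s) = qs"
    using vertex_of_contracted[OF t nl] C1 distinct pt qt ps qs nt s
    by (auto simp: jt_def contracted_def merged_vertex_def other_vertices_def)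
  have "jt s = \<iota> s" using s by (simp add: jt_def)
  have rest: "filter (\<lambda>u. u \<noteq> nt \<and> u \<noteq> qs) (nt # rt) = R"
    using nt_notin unfolding rt_def R by (auto simp: filter_filter intro!: filter_cong)
  have Jeq: "(\<lambda>h. if h = s \<or> h = jt s then h else jt h) = J"
    unfolding J \<open>jt s = \<iota> s\<close> using s by (auto simp: jt_def fun_eq_iff)
  have "ct nt = cmp P t qt (\<iota> t) (c P) (c qt)" "ct qs = c qs"
    using vs distinct nt_notin unfolding ct_def rt_def by auto
  then have Ceq: "(\<lambda>u. if u = (nt \<union> qs) - {s, jt s} then cmp nt s qs (jt s) (ct nt) (ct qs)
        else if u \<in> set R then ct u else 0) = C"
    unfolding C \<open>jt s = \<iota> s\<close> N[symmetric] using nt_notin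
    by (auto simp: ct_def R rt_def fun_eq_iff)
  have C2: "contracted cmp (nt # rt, jt, T - {t}, ct) s = (N # R, J, T - {t} - {s}, C)"
    unfolding contracted_unfold vertex_of_s rest Jeq Ceq
    by (simp add: \<open>jt s = \<iota> s\<close> N)
  have "nt \<noteq> qs" using nt_notin vs by auto
  then have "vertex_of (nt # rt) s \<noteq> vertex_of (nt # rt) (jt s)" using vertex_of_s by simp
  note G2 = ograph.ograph_contracted[OF G1 _ this co]
  show "ograph_wf Op (N # R, J, T - {t} - {s}, C)"
    using G2 C2 s by simp
  have "contract_sign (V, \<iota>, T, c) t * contract_sign (nt # rt, jt, T - {t}, ct) s
      = list_sign V (P # qt # qs # R)"
    unfolding contract_sign_def prod.case vertex_of_s other_vertices_def rest
    unfolding pt[symmetric] qt[symmetric] R rt_def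
    by (rule list_sign_merge_adjacent_pairs) (use vertices_distinct vt vs nt_notin distinct in auto)
  then show "contract2 cmp (V, \<iota>, T, c) t s
      = fscale (list_sign V (P # qt # qs # R)) (gen (N # R, J, T - {t} - {s}, C))"
    unfolding contract2_eq C1 contract_eq C2 using distinct pt qt vertex_of_s \<open>nt \<noteq> qs\<close>
    by (simp add: is_loop_def mult.commute)
qed

end
lemma (in ograph) contract2_degenerate:
  assumes t: "t \<in> T" and s: "s \<in> T" "s \<noteq> t" "s \<noteq> \<iota> t"
    and degenerate: "vertex_of V t = vertex_of V (\<iota> t) \<or> vertex_of V s = vertex_of V (\<iota> s) \<or>
      {vertex_of V s, vertex_of V (\<iota> s)} \<subseteq> {vertex_of V t, vertex_of V (\<iota> t)}"
  shows "contract2 cmp (V, \<iota>, T, c) t s = 0"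
proof (cases "vertex_of V t = vertex_of V (\<iota> t)")
  case True
  then show ?thesis by (simp add: contract2_eq is_loop_def)
next
  case False
  have "s \<in> hedges V - {t, \<iota> t}" "\<iota> s \<in> hedges V - {t, \<iota> t}"
    using tailD[OF s(1)] s by (auto simp: inv_eq_iff)
  then have "is_loop (contracted cmp (V, \<iota>, T, c) t) s"
    using vertex_of_contracted[OF t False] degenerate False s
    by (auto simp: contracted_def is_loop_def)
  then show ?thesis by (simp add: contract2_eq contract_eq)
qed

lemma mating_interchange:
  assumes co: "cyclic_operad Op cmp ren un"
    and fin: "finite P" "finite Q1" "finite Q2"
    and disj: "P \<inter> Q1 = {}" "P \<inter> Q2 = {}" "Q1 \<inter> Q2 = {}"
    and legs: "t \<in> P" "s \<in> P" "t \<noteq> s" "t' \<in> Q1" "s' \<in> Q2"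
    and col: "a \<in> Op P" "b1 \<in> Op Q1" "b2 \<in> Op Q2"
  shows "cmp ((P \<union> Q1) - {t, t'}) s Q2 s' (cmp P t Q1 t' a b1) b2
       = cmp ((P \<union> Q2) - {s, s'}) t Q1 t' (cmp P s Q2 s' a b2) b1"
proof -
  have e1: "(P \<union> Q1) - {t, t'} = (Q1 - {t'}) \<union> (P - {t})" using disj legs by auto
  have e2: "(P \<union> Q2) - {s, s'} = (P - {s}) \<union> (Q2 - {s'})" using disj legs by auto
  have "cmp ((P \<union> Q1) - {t, t'}) s Q2 s' (cmp P t Q1 t' a b1) b2
      = cmp ((Q1 - {t'}) \<union> (P - {t})) s Q2 s' (cmp Q1 t' P t b1 a) b2"
    unfolding e1 by (subst mating_comm[OF co]) (use fin disj legs col in auto)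
  also have "\<dots> = cmp Q1 t' ((P - {s}) \<union> (Q2 - {s'})) t b1 (cmp P s Q2 s' a b2)"
    by (rule mating_assoc[OF co]) (use fin disj legs col in auto)
  also have "\<dots> = cmp ((P - {s}) \<union> (Q2 - {s'})) t Q1 t' (cmp P s Q2 s' a b2) b1"
    by (rule mating_comm[OF co]) (use fin disj legs col mating_in[OF co] in auto)
  finally show ?thesis unfolding e2 .
qed

text \<open>The configurations of two edges in which the two orders of contraction are compared
  directly; reversing edges brings any two edges into one of them.\<close>

definition aligned_edges :: "'h set list \<Rightarrow> ('h \<Rightarrow> 'h) \<Rightarrow> 'h \<Rightarrow> 'h \<Rightarrow> bool" where
  "aligned_edges V \<iota> t s \<longleftrightarrow>
    (let pt = vertex_of V t; qt = vertex_of V (\<iota> t); ps = vertex_of V s; qs = vertex_of V (\<iota> s)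
     in pt = qt \<or> ps = qs \<or> {pt, qt} = {ps, qs} \<or> {pt, qt} \<inter> {ps, qs} = {} \<or> (pt = ps \<and> qt \<noteq> qs))"

lemma (in ograph) aligned_orientation:
  obtains t' s' where "t' \<in> {t, \<iota> t}" "s' \<in> {s, \<iota> s}" "aligned_edges V \<iota> t' s'"
proof (cases "aligned_edges V \<iota> t s")
  case True
  then show thesis using that by blast
next
  case False
  define pt qt ps qs where "pt = vertex_of V t" and "qt = vertex_of V (\<iota> t)"
    and "ps = vertex_of V s" and "qs = vertex_of V (\<iota> s)"
  obtain z where z: "z \<in> {pt, qt}" "z \<in> {ps, qs}"
    using False unfolding aligned_edges_def Let_def pt_def qt_def ps_def qs_def by blast
  define t' where "t' = (if pt = z then t else \<iota> t)"
  define s' where "s' = (if ps = z then s else \<iota> s)"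
  have "vertex_of V t' = z" "vertex_of V (\<iota> t') = (if pt = z then qt else pt)"
    using z(1) unfolding t'_def pt_def qt_def by auto
  moreover have "vertex_of V s' = z" "vertex_of V (\<iota> s') = (if ps = z then qs else ps)"
    using z(2) unfolding s'_def ps_def qs_def by auto
  moreover have "pt \<noteq> qt" "ps \<noteq> qs" "{pt, qt} \<noteq> {ps, qs}"
    using False unfolding aligned_edges_def Let_def pt_def qt_def ps_def qs_def by auto
  ultimately have "vertex_of V t' = vertex_of V s'" "vertex_of V (\<iota> t') \<noteq> vertex_of V (\<iota> s')"
    using z by auto
  then have "aligned_edges V \<iota> t' s'" unfolding aligned_edges_def Let_def by blast
  moreover have "t' \<in> {t, \<iota> t}" "s' \<in> {s, \<iota> s}" unfolding t'_def s'_def by auto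
  ultimately show thesis using that by blast
qed

context ograph
begin

context
  fixes cmp ren un T' t s
  assumes co: "cyclic_operad Op cmp ren un" and wf': "ograph_wf Op (V, \<iota>, T', c)"
    and t: "t \<in> T" "t \<in> T'" and s: "s \<in> T" "s \<in> T'" "s \<noteq> t" "s \<noteq> \<iota> t"
begin

lemma other_tail_distinct: "t \<noteq> s" "t \<noteq> \<iota> s"
  using s by (auto simp: inv_eq_iff)

lemma card_tails_contract2: "card ((T - {t} - {s}) - (T' - {s} - {t})) = card (T - T')"
proof -
  have "(T - {t} - {s}) - (T' - {s} - {t}) = T - T'" using t s by auto
  then show ?thesis by simp
qed

lemma contract2_antisym_disjoint:
  assumes "vertex_of V t \<noteq> vertex_of V (\<iota> t)" "vertex_of V s \<noteq> vertex_of V (\<iota> s)"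
    and "{vertex_of V t, vertex_of V (\<iota> t)} \<inter> {vertex_of V s, vertex_of V (\<iota> s)} = {}"
  shows "contract2 cmp (V, \<iota>, T, c) t s + fscale ((-1) ^ card (T - T')) (contract2 cmp (V, \<iota>, T', c) s t)
    \<in> fspan (og_rel Op ren)"
proof -
  define pt where "pt = vertex_of V t"
  define qt where "qt = vertex_of V (\<iota> t)"
  define ps where "ps = vertex_of V s"
  define qs where "qs = vertex_of V (\<iota> s)"
  define R where "R = filter (\<lambda>u. u \<notin> {pt, qt, ps, qs}) V"
  define nt where "nt = (pt \<union> qt) - {t, \<iota> t}"
  define ns where "ns = (ps \<union> qs) - {s, \<iota> s}"
  define J where "J = (\<lambda>h. if h \<in> {t, \<iota> t, s, \<iota> s} then h else \<iota> h)"
  define C where "C = (\<lambda>u. if u = ns then cmp ps s qs (\<iota> s) (c ps) (c qs)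
      else if u = nt then cmp pt t qt (\<iota> t) (c pt) (c qt) else if u \<in> set R then c u else 0)"
  define C' where "C' = (\<lambda>u. if u = nt then cmp pt t qt (\<iota> t) (c pt) (c qt)
      else if u = ns then cmp ps s qs (\<iota> s) (c ps) (c qs) else if u \<in> set R then c u else 0)"
  have disj: "pt \<noteq> qt" "ps \<noteq> qs" "{pt, qt} \<inter> {ps, qs} = {}" "{ps, qs} \<inter> {pt, qt} = {}"
    using assms unfolding pt_def qt_def ps_def qs_def by auto
  have R': "R = filter (\<lambda>u. u \<notin> {ps, qs, pt, qt}) V" unfolding R_def by (simp add: insert_commute)
  have J': "J = (\<lambda>h. if h \<in> {s, \<iota> s, t, \<iota> t} then h else \<iota> h)" unfolding J_def by (simp add: insert_commute)
  note first = contract2_disjoint_edges[OF co t(1) s(1,3,4) pt_def qt_def ps_def qs_def disj(1-3) R_def nt_def ns_def J_def C_def]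
  note second = ograph.contract2_disjoint_edges[OF ograph.intro[OF wf'] co s(2) t(2) other_tail_distinct
      ps_def qs_def pt_def qt_def disj(2,1,4) R' ns_def nt_def J' C'_def]
  have "distinct (ns # nt # R)" using first(2) ograph.vertices_distinct[OF ograph.intro] by blast
  then have "C' = C" and swap: "list_sign (ns # nt # R) (nt # ns # R) = -1"
    unfolding C_def C'_def by (auto simp: fun_eq_iff intro: list_sign_swap)
  have "reordering V (pt # qt # ps # qs # R)"
    using disj vertices_distinct edge_ends[OF t(1) assms(1)] edge_ends[OF s(1) assms(2)]
    unfolding reordering_def R_def pt_def qt_def ps_def qs_def by auto
  note sign = list_sign_swap_pairs_reordering[OF this]
  have square: "(-1::real) ^ card (T - T') * (-1) ^ card (T - T') = 1" by (simp flip: power_add mult_2)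
  show ?thesis
    unfolding first(1) second(1) \<open>C' = C\<close> fscale_fscale
    by (rule og_rel_orientation[OF first(2) second(2)[unfolded \<open>C' = C\<close>]])
      (auto simp: swap card_tails_contract2 sign square mult.assoc[symmetric])
qed

lemma contract2_antisym_adjacent:
  assumes "vertex_of V t = vertex_of V s" "vertex_of V t \<noteq> vertex_of V (\<iota> t)"
    and "vertex_of V s \<noteq> vertex_of V (\<iota> s)" "vertex_of V (\<iota> t) \<noteq> vertex_of V (\<iota> s)"
  shows "contract2 cmp (V, \<iota>, T, c) t s + fscale ((-1) ^ card (T - T')) (contract2 cmp (V, \<iota>, T', c) s t)
    \<in> fspan (og_rel Op ren)"
proof -
  define P where "P = vertex_of V t"
  define qt where "qt = vertex_of V (\<iota> t)"
  define qs where "qs = vertex_of V (\<iota> s)"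
  have P: "P = vertex_of V t" "P = vertex_of V s" using assms(1) by (auto simp: P_def)
  have distinct: "P \<noteq> qt" "P \<noteq> qs" "qt \<noteq> qs" using assms unfolding P_def qt_def qs_def by auto
  define R where "R = filter (\<lambda>u. u \<notin> {P, qt, qs}) V"
  define nt where "nt = (P \<union> qt) - {t, \<iota> t}"
  define ns where "ns = (P \<union> qs) - {s, \<iota> s}"
  define N where "N = (nt \<union> qs) - {s, \<iota> s}"
  define N' where "N' = (ns \<union> qt) - {t, \<iota> t}"
  define J where "J = (\<lambda>h. if h \<in> {t, \<iota> t, s, \<iota> s} then h else \<iota> h)"
  define C where "C = (\<lambda>u. if u = N then cmp nt s qs (\<iota> s) (cmp P t qt (\<iota> t) (c P) (c qt)) (c qs)
      else if u \<in> set R then c u else 0)"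
  define C' where "C' = (\<lambda>u. if u = N' then cmp ns t qt (\<iota> t) (cmp P s qs (\<iota> s) (c P) (c qs)) (c qt)
      else if u \<in> set R then c u else 0)"
  have R': "R = filter (\<lambda>u. u \<notin> {P, qs, qt}) V" unfolding R_def by (simp add: insert_commute)
  have J': "J = (\<lambda>h. if h \<in> {s, \<iota> s, t, \<iota> t} then h else \<iota> h)" unfolding J_def by (simp add: insert_commute)
  note first = contract2_adjacent_edges[OF co t(1) s(1,3,4) P(1) qt_def P(2) qs_def distinct R_def nt_def N_def J_def C_def]
  note second = ograph.contract2_adjacent_edges[OF ograph.intro[OF wf'] co s(2) t(2) other_tail_distinct
      P(2) qs_def P(1) qt_def distinct(2,1) distinct(3)[symmetric] R' ns_def N'_def J' C'_def]
  have vertices: "P \<in> set V" "qt \<in> set V" "qs \<in> set V" "t \<in> P" "s \<in> P" "\<iota> t \<in> qt" "\<iota> s \<in> qs"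
    using edge_ends[OF t(1) assms(2)] edge_ends[OF s(1) assms(3)] assms(1) unfolding P_def qt_def qs_def by auto
  then have disj: "P \<inter> qt = {}" "P \<inter> qs = {}" "qt \<inter> qs = {}"
    using vertices_disjointD distinct by auto
  then have "t \<notin> qs" "\<iota> t \<notin> qs" "s \<notin> qt" "\<iota> s \<notin> qt"
    using vertices by blast+
  then have NN: "N' = N" unfolding N_def N'_def nt_def ns_def by blast
  have "finite P" "finite qt" "finite qs" using vertex_finite_card vertices by auto
  moreover have "c P \<in> Op P" "c qt \<in> Op qt" "c qs \<in> Op qs" using colour_in vertices by auto
  ultimately have mate: "cmp nt s qs (\<iota> s) (cmp P t qt (\<iota> t) (c P) (c qt)) (c qs)
      = cmp ns t qt (\<iota> t) (cmp P s qs (\<iota> s) (c P) (c qs)) (c qt)"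
    unfolding nt_def ns_def
    using mating_interchange[OF co _ _ _ disj vertices(4,5) other_tail_distinct(1) vertices(6,7)] by blast
  have "C' = C" unfolding C_def C'_def NN mate ..
  have "reordering V (P # qt # qs # R)"
    using distinct vertices_distinct vertices unfolding reordering_def R_def by auto
  note sign = list_sign_swap_2_3_reordering[OF this]
  have "distinct (N # R)" using first(2) ograph.vertices_distinct[OF ograph.intro] by blast
  then have same: "list_sign (N # R) (N # R) = 1" by (rule list_sign_refl)
  have square: "(-1::real) ^ card (T - T') * (-1) ^ card (T - T') = 1" by (simp flip: power_add mult_2)
  show ?thesis
    unfolding first(1) second(1) \<open>C' = C\<close> NN fscale_fscale
    by (rule og_rel_orientation[OF first(2) second(2)[unfolded \<open>C' = C\<close> NN]])
      (auto simp: same card_tails_contract2 sign square mult.assoc[symmetric])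
qed

lemma contract2_antisym_aligned:
  assumes "aligned_edges V \<iota> t s"
  shows "contract2 cmp (V, \<iota>, T, c) t s + fscale ((-1) ^ card (T - T')) (contract2 cmp (V, \<iota>, T', c) s t)
    \<in> fspan (og_rel Op ren)"
proof -
  define pt qt ps qs where "pt = vertex_of V t" and "qt = vertex_of V (\<iota> t)"
    and "ps = vertex_of V s" and "qs = vertex_of V (\<iota> s)"
  consider (degenerate) "pt = qt \<or> ps = qs \<or> {pt, qt} = {ps, qs}"
    | (disjoint) "pt \<noteq> qt" "ps \<noteq> qs" "{pt, qt} \<inter> {ps, qs} = {}"
    | (adjacent) "pt = ps" "pt \<noteq> qt" "ps \<noteq> qs" "qt \<noteq> qs"
  proof (cases "pt = qt \<or> ps = qs \<or> {pt, qt} = {ps, qs}")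
    case False
    then have "pt \<noteq> qt" "ps \<noteq> qs" by simp_all
    moreover have "{pt, qt} \<inter> {ps, qs} = {} \<or> (pt = ps \<and> qt \<noteq> qs)"
      using assms False unfolding aligned_edges_def pt_def qt_def ps_def qs_def Let_def by blast
    ultimately show thesis using that(2,3) by blast
  qed (rule that(1))
  then show ?thesis
  proof cases
    case degenerate
    then have "pt = qt \<or> ps = qs \<or> {ps, qs} \<subseteq> {pt, qt}" and "ps = qs \<or> pt = qt \<or> {pt, qt} \<subseteq> {ps, qs}"
      by auto
    note loops = this[unfolded pt_def qt_def ps_def qs_def]
    have "contract2 cmp (V, \<iota>, T, c) t s = 0"
      by (rule contract2_degenerate[OF t(1) s(1,3,4) loops(1)])
    moreover have "contract2 cmp (V, \<iota>, T', c) s t = 0"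
      by (rule ograph.contract2_degenerate[OF ograph.intro[OF wf'] s(2) t(2) other_tail_distinct loops(2)])
    ultimately show ?thesis by simp
  next
    case disjoint
    then show ?thesis unfolding pt_def qt_def ps_def qs_def by (rule contract2_antisym_disjoint)
  next
    case adjacent
    then show ?thesis unfolding pt_def qt_def ps_def qs_def by (rule contract2_antisym_adjacent)
  qed
qed

end

end
context ograph
begin

lemma card_tails_diff_reoriented:
  assumes wf': "ograph_wf Op (V, \<iota>, T', c)"
    and t: "t \<in> T" "t' \<in> T'" "t' \<in> {t, \<iota> t}" and s: "s \<in> T" "s' \<in> T'" "s' \<in> {s, \<iota> s}"
    and u: "u \<in> {t, \<iota> t}" "v \<in> {s, \<iota> s}" and ts: "s \<noteq> t" "s \<noteq> \<iota> t"
  shows "(-1::real) ^ card (T - T')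
    = (-1) ^ card ((T - {t, s} \<union> {u, v}) - (T' - {s', t'} \<union> {v, u})) * bool_sign (t = t') * bool_sign (s = s')"
proof -
  interpret G': ograph Op V \<iota> T' c by (rule ograph.intro[OF wf'])
  define E where "E = {t, \<iota> t, s, \<iota> s}"
  have "T \<inter> E = {t, s}" using t s tailD unfolding E_def by auto
  moreover have "T' \<inter> E = {t', s'}"
    using t s G'.tailD(1)[OF t(2)] G'.tailD(1)[OF s(2)] unfolding E_def by auto
  moreover have "{u, v, t, s, t', s'} \<subseteq> E" using t s u unfolding E_def by auto
  ultimately have diff: "(T - {t, s} \<union> {u, v}) - (T' - {s', t'} \<union> {v, u}) = (T - T') - E"
    and diff_E: "(T - T') \<inter> E = {t, s} - T'" by blast+
  have "card (T - T') = card ((T - T') - E) + card ((T - T') \<inter> E)"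
    using finite_tails by (metis Diff_Diff_Int Diff_disjoint card_Un_disjoint finite_Diff finite_Int
        inf_commute Un_Diff_Int)
  moreover have "t \<in> T' \<longleftrightarrow> t = t'" "s \<in> T' \<longleftrightarrow> s = s'"
    using t s G'.tailD(1) by auto
  moreover have "t \<noteq> s" using ts by auto
  then have "card ({t, s} - T') = (if t \<in> T' then 0 else 1) + (if s \<in> T' then 0 else 1)"
    by (cases "t \<in> T'"; cases "s \<in> T'") (simp_all add: insert_Diff_if)
  ultimately show ?thesis
    unfolding diff diff_E by (auto simp: power_add bool_sign_def)
qed

lemma contract2_antisym:
  assumes co: "cyclic_operad Op cmp ren un" and wf': "ograph_wf Op (V, \<iota>, T', c)"
    and t: "t \<in> T" "t' \<in> T'" "t' \<in> {t, \<iota> t}"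
    and s: "s \<in> T" "s' \<in> T'" "s' \<in> {s, \<iota> s}" and ts: "s \<noteq> t" "s \<noteq> \<iota> t"
  shows "contract2 cmp (V, \<iota>, T, c) t s + fscale ((-1) ^ card (T - T')) (contract2 cmp (V, \<iota>, T', c) s' t')
    \<in> fspan (og_rel Op ren)"
proof -
  interpret G': ograph Op V \<iota> T' c by (rule ograph.intro[OF wf'])
  obtain u v where u: "u \<in> {t, \<iota> t}" and v: "v \<in> {s, \<iota> s}" and aligned: "aligned_edges V \<iota> u v"
    using aligned_orientation by blast
  have s't': "t' \<noteq> s'" "t' \<noteq> \<iota> s'" "u \<in> {t', \<iota> t'}" "v \<in> {s', \<iota> s'}" "v \<noteq> u" "v \<noteq> \<iota> u"
    using t s u v ts by (auto simp: inv_eq_iff)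
  define T0 where "T0 = T - {t, s} \<union> {u, v}"
  define T0' where "T0' = T' - {s', t'} \<union> {v, u}"
  note R = contract2_reorient[OF co t(1) s(1) ts u v, folded T0_def]
  note R' = G'.contract2_reorient[OF co s(2) t(2) s't'(1,2) s't'(4,3), folded T0'_def]
  have "contract2 cmp (V, \<iota>, T0, c) u v + fscale ((-1) ^ card (T0 - T0')) (contract2 cmp (V, \<iota>, T0', c) v u)
      \<in> fspan (og_rel Op ren)"
    by (rule ograph.contract2_antisym_aligned[OF ograph.intro[OF R(1)] co R'(1) _ _ _ _ s't'(5,6) aligned])
      (auto simp: T0_def T0'_def)
  then have "fscale (bool_sign (u = t) * bool_sign (v = s))
      (contract2 cmp (V, \<iota>, T0, c) u v + fscale ((-1) ^ card (T0 - T0')) (contract2 cmp (V, \<iota>, T0', c) v u))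
      \<in> fspan (og_rel Op ren)"
    by (rule fspan_fscale)
  moreover have "bool_sign (u = t) = bool_sign (t = t') * bool_sign (u = t')"
    "bool_sign (v = s) = bool_sign (s = s') * bool_sign (v = s')"
    using t s u v tailD G'.tailD by (auto simp: bool_sign_def)
  ultimately show ?thesis
    unfolding R(2) R'(2) card_tails_diff_reoriented[OF wf' t s u v ts, folded T0_def T0'_def]
    by (simp add: fscale_add algebra_simps)
qed

end
section \<open>The square of the H-boundary\<close>

context ograph
begin

context
  fixes x y x' y'
  assumes xy: "x \<in> hedges V" "y \<in> hedges V" "x \<noteq> y" "x \<noteq> \<iota> y"
    and xy': "x' \<in> hedges V - {x, y}" "y' \<in> hedges V - {x, y}" "x' \<noteq> y'" "x' \<noteq> reglued_inv \<iota> x y y'"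
begin

lemma reglued_twice_basics:
  shows second_pair_hedges: "x' \<in> hedges V" "y' \<in> hedges V"
    and "x \<noteq> \<iota> x" "y \<noteq> \<iota> y" "x' \<noteq> \<iota> x'" "y' \<noteq> \<iota> y'"
    and "\<iota> x \<noteq> y" "\<iota> x \<noteq> \<iota> y"
    and "x' \<noteq> x" "x' \<noteq> y" "y' \<noteq> x" "y' \<noteq> y"
    and "\<not> (x' = \<iota> x \<and> y' = \<iota> y)" "\<not> (x' = \<iota> y \<and> y' = \<iota> x)"
    and second_pair_valid: "x' \<noteq> \<iota> y'"
proof -
  show H: "x' \<in> hedges V" "y' \<in> hedges V" using xy' by auto
  show f: "x \<noteq> \<iota> x" "y \<noteq> \<iota> y" "x' \<noteq> \<iota> x'" "y' \<noteq> \<iota> y'"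
    using inv_neq xy(1,2) H by metis+
  show d: "\<iota> x \<noteq> y" "\<iota> x \<noteq> \<iota> y" using xy by (auto simp: inv_eq_iff)
  show p: "x' \<noteq> x" "x' \<noteq> y" "y' \<noteq> x" "y' \<noteq> y" using xy' by auto
  show "\<not> (x' = \<iota> x \<and> y' = \<iota> y)" "\<not> (x' = \<iota> y \<and> y' = \<iota> x)"
    using xy'(4) p f d by (auto simp: reglued_inv_def)
  show "x' \<noteq> \<iota> y'"
    using xy'(4) p f d by (auto simp: reglued_inv_def split: if_splits)
qed

lemma reglue_pair_after_reglue: "x \<noteq> reglued_inv \<iota> x' y' y"
  using reglued_twice_basics xy unfolding reglued_inv_def by (auto simp: inv_eq_iff)

lemma reglued_inv_commute:
  "reglued_inv (reglued_inv \<iota> x y) x' y' = reglued_inv (reglued_inv \<iota> x' y') x y"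
  using reglued_twice_basics xy xy' unfolding reglued_inv_def by (auto simp: inv_eq_iff fun_eq_iff)

lemma second_tail_not_reglued: "y' \<noteq> reglued_inv (reglued_inv \<iota> x y) x' y' y"
  using reglued_twice_basics xy unfolding reglued_inv_def by (auto simp: inv_eq_iff)

lemma reglue_sign_twice:
  assumes T2_def: "T2 = (((T - {x, \<iota> x, y, \<iota> y}) \<union> {\<iota> x, y}) - {x', reglued_inv \<iota> x y x', y', reglued_inv \<iota> x y y'})
      \<union> {reglued_inv \<iota> x y x', y'}"
    and U2_def: "U2 = (((T - {x', \<iota> x', y', \<iota> y'}) \<union> {\<iota> x', y'}) - {x, reglued_inv \<iota> x' y' x, y, reglued_inv \<iota> x' y' y})
      \<union> {reglued_inv \<iota> x' y' x, y}"
  shows "reglue_sign (V, \<iota>, T, c) x y * reglue_sign (reglued (V, \<iota>, T, c) x y) x' y'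
      = (-1) ^ card (T2 - U2) * (reglue_sign (V, \<iota>, T, c) x' y' * reglue_sign (reglued (V, \<iota>, T, c) x' y') x y)"
proof -
  let ?X = "(V, \<iota>, T, c)"
  define T1 where "T1 = (T - {x, \<iota> x, y, \<iota> y}) \<union> {\<iota> x, y}"
  define U1 where "U1 = (T - {x', \<iota> x', y', \<iota> y'}) \<union> {\<iota> x', y'}"
  have signs: "reglue_sign ?X x y = bool_sign (x \<in> T) * bool_sign (\<iota> y \<in> T)"
    "reglue_sign ?X x' y' = bool_sign (x' \<in> T) * bool_sign (\<iota> y' \<in> T)"
    "reglue_sign (reglued ?X x y) x' y' = bool_sign (x' \<in> T1) * bool_sign (reglued_inv \<iota> x y y' \<in> T1)"
    "reglue_sign (reglued ?X x' y') x y = bool_sign (x \<in> U1) * bool_sign (reglued_inv \<iota> x' y' y \<in> U1)"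
    unfolding reglued_eq T1_def U1_def
    using xy(4) second_pair_valid xy'(4) reglue_pair_after_reglue by (simp_all add: reglue_sign_bool_sign)
  note facts = reglued_twice_basics xy xy'(3)
  have tails: "\<iota> h \<in> T \<longleftrightarrow> h \<notin> T" if "h \<in> {x, y, x', y'}" for h
    using that tail_iff xy second_pair_hedges by auto
  consider (G) "x' \<noteq> \<iota> x" "x' \<noteq> \<iota> y" "y' \<noteq> \<iota> x" "y' \<noteq> \<iota> y" | (Q1) "y' = \<iota> x" | (Q2) "y' = \<iota> y"
    | (P1) "x' = \<iota> x" | (P2) "x' = \<iota> y" by blast
  then show ?thesis
  proof cases
    case G
    have "x \<noteq> \<iota> x'" "y \<noteq> \<iota> x'" "x \<noteq> \<iota> y'" "y \<noteq> \<iota> y'" "\<iota> x \<noteq> \<iota> y'" "\<iota> y \<noteq> \<iota> y'"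
      "\<iota> x' \<noteq> \<iota> x" "\<iota> x' \<noteq> \<iota> y"
      using G facts inv_eq_iff by metis+
    then have "T2 - U2 = {}" and "reglued_inv \<iota> x y y' = \<iota> y'" "reglued_inv \<iota> x' y' y = \<iota> y"
      and "x' \<in> T1 \<longleftrightarrow> x' \<in> T" "\<iota> y' \<in> T1 \<longleftrightarrow> \<iota> y' \<in> T" "x \<in> U1 \<longleftrightarrow> x \<in> T" "\<iota> y \<in> U1 \<longleftrightarrow> \<iota> y \<in> T"
      using G facts unfolding reglued_inv_def T1_def U1_def T2_def U2_def by auto
    moreover from this(1) have "(-1::real) ^ card (T2 - U2) = 1" by (metis card.empty power_0)
    ultimately show ?thesis by (simp add: signs mult_ac)
  next
    case Q1
    have "x' \<noteq> \<iota> x" "x' \<noteq> \<iota> y" "y \<noteq> \<iota> x'" "\<iota> y \<noteq> \<iota> x'" "\<iota> x' \<noteq> x"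
      using Q1 facts inv_eq_iff by metis+
    then have "T2 - U2 = {}" and "reglued_inv \<iota> x y y' = \<iota> y" "reglued_inv \<iota> x' y' y = \<iota> y"
      and "x' \<in> T1 \<longleftrightarrow> x' \<in> T" "\<iota> y \<notin> T1" "x \<notin> U1" "\<iota> y \<in> U1 \<longleftrightarrow> \<iota> y \<in> T" "\<iota> y' \<in> T \<longleftrightarrow> x \<in> T"
      using Q1 facts unfolding reglued_inv_def T1_def U1_def T2_def U2_def by auto
    moreover from this(1) have "(-1::real) ^ card (T2 - U2) = 1" by (metis card.empty power_0)
    ultimately show ?thesis by (simp add: signs mult_ac)
  next
    case Q2
    have "x' \<noteq> \<iota> x" "x' \<noteq> \<iota> y" "x \<noteq> \<iota> x'" "\<iota> x \<noteq> \<iota> x'" "\<iota> x' \<noteq> y"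
      using Q2 facts inv_eq_iff by metis+
    then have "reglued_inv \<iota> x y y' = \<iota> x" "reglued_inv \<iota> x' y' y = \<iota> x'" "T2 - U2 = {\<iota> x'}"
      and "x' \<in> T1 \<longleftrightarrow> x' \<in> T" "\<iota> x \<in> T1" "x \<in> U1 \<longleftrightarrow> x \<in> T" "\<iota> x' \<in> U1" "\<iota> y' \<in> T \<longleftrightarrow> y \<in> T"
      using Q2 facts unfolding reglued_inv_def T1_def U1_def T2_def U2_def by auto
    then show ?thesis using tails[of y] tails[of x] by (simp add: signs bool_sign_def)
  next
    case P1
    have "y' \<noteq> \<iota> x" "y' \<noteq> \<iota> y" "y \<noteq> \<iota> y'" "\<iota> y \<noteq> \<iota> y'" "\<iota> y' \<noteq> x" "\<iota> y' \<noteq> \<iota> x"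
      using P1 facts inv_eq_iff by metis+
    then have "reglued_inv \<iota> x y y' = \<iota> y'" "reglued_inv \<iota> x' y' y = \<iota> y" "T2 - U2 = {\<iota> y}"
      and "x' \<in> T1" "\<iota> y' \<in> T1 \<longleftrightarrow> \<iota> y' \<in> T" "x \<in> U1" "\<iota> y \<in> U1 \<longleftrightarrow> \<iota> y \<in> T" "x' \<in> T \<longleftrightarrow> \<iota> x \<in> T"
      using P1 facts unfolding reglued_inv_def T1_def U1_def T2_def U2_def by auto
    then show ?thesis using tails[of x] by (simp add: signs bool_sign_def)
  next
    case P2
    have "y' \<noteq> \<iota> x" "y' \<noteq> \<iota> y" "x \<noteq> \<iota> y'" "\<iota> x \<noteq> \<iota> y'" "\<iota> y' \<noteq> y" "\<iota> y' \<noteq> \<iota> y"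
      using P2 facts inv_eq_iff by metis+
    then have "T2 - U2 = {}" and "reglued_inv \<iota> x y y' = \<iota> y'" "reglued_inv \<iota> x' y' y = \<iota> y'"
      and "x' \<notin> T1" "\<iota> y' \<in> T1 \<longleftrightarrow> \<iota> y' \<in> T" "x \<in> U1 \<longleftrightarrow> x \<in> T" "\<iota> y' \<notin> U1" "x' \<in> T \<longleftrightarrow> \<iota> y \<in> T"
      using P2 facts unfolding reglued_inv_def T1_def U1_def T2_def U2_def by auto
    moreover from this(1) have "(-1::real) ^ card (T2 - U2) = 1" by (metis card.empty power_0)
    ultimately show ?thesis by (simp add: signs mult_ac)
  qed
qed
end

end
lemma lin_ext_dH_eq:
  "lin_ext D (dH cmp (V, \<iota>, T, c)) = (\<Sum>(x, y)\<in>reglue_pairs V \<iota>.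
     fscale (reglue_sign (V, \<iota>, T, c) x y) (lin_ext D (contract cmp (reglued (V, \<iota>, T, c) x y) y)))"
  unfolding dH_eq by (subst lin_ext_sum) (auto simp: case_prod_beta lin_ext_fscale intro!: sum.cong)

definition dH_dH_index :: "'h set list \<Rightarrow> ('h \<Rightarrow> 'h) \<Rightarrow> (('h \<times> 'h) \<times> ('h \<times> 'h)) set" where
  "dH_dH_index V \<iota> = Sigma (reglue_pairs V \<iota>) (\<lambda>(x, y). avoiding_pairs V (reglued_inv \<iota> x y) y)"

definition dH_dH_term :: "('h set \<Rightarrow> 'h \<Rightarrow> 'h set \<Rightarrow> 'h \<Rightarrow> 'v \<Rightarrow> 'v \<Rightarrow> 'v)
    \<Rightarrow> ('h, 'v::real_vector) ograph \<Rightarrow> ('h \<times> 'h) \<times> ('h \<times> 'h) \<Rightarrow> ('h, 'v) ograph \<Rightarrow> real" where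
  "dH_dH_term cmp X = (\<lambda>((x, y), (x', y')).
     fscale (reglue_sign X x y * reglue_sign (reglued X x y) x' y')
       (contract2 cmp (reglued (reglued X x y) x' y') y y'))"

context ograph
begin

lemma finite_avoiding_pairs: "finite (avoiding_pairs V \<iota>' t)"
  unfolding avoiding_pairs_def
  by (rule finite_subset[of _ "hedges V \<times> hedges V"]) (auto simp: finite_hedges)

lemma dH_dH_expansion:
  "lin_ext (dH cmp) (dH cmp (V, \<iota>, T, c)) = (\<Sum>i\<in>dH_dH_index V \<iota>. dH_dH_term cmp (V, \<iota>, T, c) i)"
proof -
  let ?X = "(V, \<iota>, T, c)"
  let ?B = "\<lambda>(x, y). avoiding_pairs V (reglued_inv \<iota> x y) y"
  have "fscale (reglue_sign ?X x y) (lin_ext (dH cmp) (contract cmp (reglued ?X x y) y))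
      = (\<Sum>q\<in>?B (x, y). dH_dH_term cmp ?X ((x, y), q))" if "(x, y) \<in> reglue_pairs V \<iota>" for x y
  proof -
    have xy: "x \<in> hedges V" "y \<in> hedges V" "x \<noteq> y" "x \<noteq> \<iota> y"
      using that by (auto simp: reglue_pairs_def)
    have "ograph Op V (reglued_inv \<iota> x y) ((T - {x, \<iota> x, y, \<iota> y}) \<union> {\<iota> x, y}) c"
      using ograph_reglued[OF xy] by (simp add: reglued_eq ograph.intro)
    from ograph.dH_contract[OF this, of y cmp] show ?thesis
      by (simp add: reglued_eq fscale_sum dH_dH_term_def case_prod_beta)
  qed
  then have "lin_ext (dH cmp) (dH cmp ?X) = (\<Sum>p\<in>reglue_pairs V \<iota>. \<Sum>q\<in>?B p. dH_dH_term cmp ?X (p, q))"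
    unfolding lin_ext_dH_eq by (intro sum.cong) auto
  also have "\<dots> = (\<Sum>i\<in>dH_dH_index V \<iota>. dH_dH_term cmp ?X i)"
    using sum.Sigma[OF finite_reglue_pairs, of ?B "\<lambda>p q. dH_dH_term cmp ?X (p, q)"] finite_avoiding_pairs
    by (simp add: dH_dH_index_def case_prod_beta')
  finally show ?thesis .
qed

lemma dH_dH_index_iff:
  "((x, y), (x', y')) \<in> dH_dH_index V \<iota> \<longleftrightarrow>
     x \<in> hedges V \<and> y \<in> hedges V \<and> x \<noteq> y \<and> x \<noteq> \<iota> y \<and>
     x' \<in> hedges V - {x, y} \<and> y' \<in> hedges V - {x, y} \<and> x' \<noteq> y' \<and> x' \<noteq> reglued_inv \<iota> x y y'"
proof -
  have "reglued_inv \<iota> x y y = x" if "x \<noteq> y" by (simp add: reglued_inv_def that)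
  then show ?thesis by (auto simp: dH_dH_index_def reglue_pairs_def avoiding_pairs_def)
qed

lemma dH_dH_index_swap:
  assumes "((x, y), (x', y')) \<in> dH_dH_index V \<iota>"
  shows "((x', y'), (x, y)) \<in> dH_dH_index V \<iota>"
proof -
  have xy: "x \<in> hedges V" "y \<in> hedges V" "x \<noteq> y" "x \<noteq> \<iota> y"
    and xy': "x' \<in> hedges V - {x, y}" "y' \<in> hedges V - {x, y}" "x' \<noteq> y'" "x' \<noteq> reglued_inv \<iota> x y y'"
    using assms unfolding dH_dH_index_iff by auto
  show ?thesis
    unfolding dH_dH_index_iff
    using reglued_twice_basics[OF xy xy'] reglue_pair_after_reglue[OF xy xy'] xy xy' by auto
qed

lemma dH_dH_term_cancel:
  assumes co: "cyclic_operad Op cmp ren un" and i: "((x, y), (x', y')) \<in> dH_dH_index V \<iota>"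
  shows "dH_dH_term cmp (V, \<iota>, T, c) ((x, y), (x', y')) + dH_dH_term cmp (V, \<iota>, T, c) ((x', y'), (x, y))
      \<in> fspan (og_rel Op ren)"
proof -
  let ?X = "(V, \<iota>, T, c)"
  have xy: "x \<in> hedges V" "y \<in> hedges V" "x \<noteq> y" "x \<noteq> \<iota> y"
    and xy': "x' \<in> hedges V - {x, y}" "y' \<in> hedges V - {x, y}" "x' \<noteq> y'" "x' \<noteq> reglued_inv \<iota> x y y'"
    using i unfolding dH_dH_index_iff by auto
  note basics = reglued_twice_basics[OF xy xy']
  define J where "J = reglued_inv (reglued_inv \<iota> x y) x' y'"
  define T2 where "T2 = (((T - {x, \<iota> x, y, \<iota> y}) \<union> {\<iota> x, y}) - {x', reglued_inv \<iota> x y x', y', reglued_inv \<iota> x y y'})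
      \<union> {reglued_inv \<iota> x y x', y'}"
  define U2 where "U2 = (((T - {x', \<iota> x', y', \<iota> y'}) \<union> {\<iota> x', y'}) - {x, reglued_inv \<iota> x' y' x, y, reglued_inv \<iota> x' y' y})
      \<union> {reglued_inv \<iota> x' y' x, y}"
  have W2: "reglued (reglued ?X x y) x' y' = (V, J, T2, c)"
    unfolding reglued_eq J_def T2_def ..
  have W2': "reglued (reglued ?X x' y') x y = (V, J, U2, c)"
    unfolding reglued_eq J_def U2_def reglued_inv_commute[OF xy xy'] ..
  have G1: "ograph Op V (reglued_inv \<iota> x y) ((T - {x, \<iota> x, y, \<iota> y}) \<union> {\<iota> x, y}) c"
    using ograph_reglued[OF xy] by (simp add: reglued_eq ograph.intro)
  have G1': "ograph Op V (reglued_inv \<iota> x' y') ((T - {x', \<iota> x', y', \<iota> y'}) \<union> {\<iota> x', y'}) c"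
    using ograph.intro[OF ograph_reglued[OF second_pair_hedges[OF xy xy'] xy'(3) second_pair_valid[OF xy xy'], unfolded reglued_eq]] .
  have "ograph_wf Op (V, J, T2, c)"
    using ograph.ograph_reglued[OF G1, of x' y'] xy' W2 by (simp add: reglued_eq)
  moreover have "ograph_wf Op (V, J, U2, c)"
    using ograph.ograph_reglued[OF G1', of x y] xy basics reglue_pair_after_reglue[OF xy xy'] W2'
    by (simp add: reglued_eq)
  moreover have "y \<in> T2" "y' \<in> T2" "y \<in> U2" "y' \<in> U2"
    unfolding T2_def U2_def reglued_inv_def using basics xy by (auto simp: inv_eq_iff)
  ultimately have D: "contract2 cmp (V, J, T2, c) y y' + fscale ((-1) ^ card (T2 - U2)) (contract2 cmp (V, J, U2, c) y' y)
      \<in> fspan (og_rel Op ren)"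
    using second_tail_not_reglued[OF xy xy'] basics
    by (intro ograph.contract2_antisym[OF ograph.intro co]) (auto simp: J_def)
  have "(-1::real) ^ card (T2 - U2) * (-1) ^ card (T2 - U2) = 1" by (simp flip: power_add mult_2)
  then have "reglue_sign ?X x' y' * reglue_sign (reglued ?X x' y') x y
      = (-1) ^ card (T2 - U2) * (reglue_sign ?X x y * reglue_sign (reglued ?X x y) x' y')"
    using reglue_sign_twice[OF xy xy' T2_def U2_def] by (simp add: algebra_simps)
  then have "dH_dH_term cmp ?X ((x, y), (x', y')) + dH_dH_term cmp ?X ((x', y'), (x, y))
      = fscale (reglue_sign ?X x y * reglue_sign (reglued ?X x y) x' y')
          (contract2 cmp (V, J, T2, c) y y' + fscale ((-1) ^ card (T2 - U2)) (contract2 cmp (V, J, U2, c) y' y))"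
    by (simp add: dH_dH_term_def W2 W2' fscale_add mult.commute)
  then show "dH_dH_term cmp ?X ((x, y), (x', y')) + dH_dH_term cmp ?X ((x', y'), (x, y)) \<in> fspan (og_rel Op ren)"
    using fspan_fscale[OF D] by simp
qed

lemma dH_dH_gen:
  assumes "cyclic_operad Op cmp ren un"
  shows "lin_ext (dH cmp) (lin_ext (dH cmp) (gen (V, \<iota>, T, c))) \<in> fspan (og_rel Op ren)"
  unfolding lin_ext_gen dH_dH_expansion
proof (rule sum_in_fspan_involution[where \<phi> = "\<lambda>(p, q). (q, p)"])
  show "finite (dH_dH_index V \<iota>)"
    unfolding dH_dH_index_def
    by (intro finite_SigmaI finite_reglue_pairs) (simp add: finite_avoiding_pairs split: prod.split)
qed (use dH_dH_index_swap dH_dH_term_cancel[OF assms] in auto)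

end

section \<open>The H-boundary anticommutes with the E-boundary\<close>

context ograph
begin

lemma ograph_reglued_tails:
  assumes "(x, y) \<in> reglue_pairs V \<iota>"
  shows "ograph Op V (reglued_inv \<iota> x y) ((T - {x, \<iota> x, y, \<iota> y}) \<union> {\<iota> x, y}) c"
  using ograph_reglued[of x y] assms by (auto simp: reglue_pairs_def reglued_eq intro: ograph.intro)

lemma dH_dE_expansion:
  "lin_ext (dH cmp) (dE cmp (V, \<iota>, T, c))
     = (\<Sum>(t, (x, y))\<in>Sigma T (avoiding_pairs V \<iota>).
          fscale (reglue_sign (V, \<iota>, T, c) x y) (contract2 cmp (reglued (V, \<iota>, T, c) x y) t y))"
proof -
  let ?X = "(V, \<iota>, T, c)"
  have "lin_ext (dH cmp) (dE cmp ?X) = (\<Sum>t\<in>T. lin_ext (dH cmp) (contract cmp ?X t))"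
    unfolding dE_def prod.case by (rule lin_ext_sum) simp
  also have "\<dots> = (\<Sum>t\<in>T. \<Sum>(x, y)\<in>avoiding_pairs V \<iota> t.
      fscale (reglue_sign ?X x y) (contract2 cmp (reglued ?X x y) t y))"
    by (rule sum.cong[OF refl]) (simp add: dH_contract)
  also have "\<dots> = (\<Sum>(t, (x, y))\<in>Sigma T (avoiding_pairs V \<iota>).
      fscale (reglue_sign ?X x y) (contract2 cmp (reglued ?X x y) t y))"
    using sum.Sigma[OF finite_tails, of "avoiding_pairs V \<iota>"] finite_avoiding_pairs
    by (simp add: case_prod_beta')
  finally show ?thesis .
qed

lemma dE_dH_expansion:
  "lin_ext (dE cmp) (dH cmp (V, \<iota>, T, c))
     = (\<Sum>((x, y), t)\<in>Sigma (reglue_pairs V \<iota>) (\<lambda>(x, y). T - {x, \<iota> x, y, \<iota> y}).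
          fscale (reglue_sign (V, \<iota>, T, c) x y) (contract2 cmp (reglued (V, \<iota>, T, c) x y) y t))
     + (\<Sum>(x, y)\<in>reglue_pairs V \<iota>.
          fscale (reglue_sign (V, \<iota>, T, c) x y) (contract2 cmp (reglued (V, \<iota>, T, c) x y) y (\<iota> x)))"
proof -
  let ?X = "(V, \<iota>, T, c)"
  let ?F = "\<lambda>x y t. fscale (reglue_sign ?X x y) (contract2 cmp (reglued ?X x y) y t)"
  have "fscale (reglue_sign ?X x y) (lin_ext (dE cmp) (contract cmp (reglued ?X x y) y))
      = (\<Sum>t\<in>T - {x, \<iota> x, y, \<iota> y}. ?F x y t) + ?F x y (\<iota> x)" if "(x, y) \<in> reglue_pairs V \<iota>" for x y
  proof -
    have "\<iota> x \<noteq> y" using that by (auto simp: reglue_pairs_def inv_eq_iff)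
    then have "(T - {x, \<iota> x, y, \<iota> y}) \<union> {\<iota> x, y} - {y} = insert (\<iota> x) (T - {x, \<iota> x, y, \<iota> y})" by auto
    then have "lin_ext (dE cmp) (contract cmp (reglued ?X x y) y)
        = contract2 cmp (reglued ?X x y) y (\<iota> x) + (\<Sum>t\<in>T - {x, \<iota> x, y, \<iota> y}. contract2 cmp (reglued ?X x y) y t)"
      unfolding reglued_eq dE_contract using finite_tails by (simp add: sum.insert)
    then show ?thesis by (simp add: fscale_add fscale_sum add.commute)
  qed
  then have "lin_ext (dE cmp) (dH cmp ?X)
      = (\<Sum>(x, y)\<in>reglue_pairs V \<iota>. (\<Sum>t\<in>T - {x, \<iota> x, y, \<iota> y}. ?F x y t) + ?F x y (\<iota> x))"
    unfolding lin_ext_dH_eq by (intro sum.cong) auto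
  also have "\<dots> = (\<Sum>((x, y), t)\<in>Sigma (reglue_pairs V \<iota>) (\<lambda>(x, y). T - {x, \<iota> x, y, \<iota> y}). ?F x y t)
      + (\<Sum>(x, y)\<in>reglue_pairs V \<iota>. ?F x y (\<iota> x))"
    using sum.Sigma[OF finite_reglue_pairs, of "\<lambda>(x, y). T - {x, \<iota> x, y, \<iota> y}"] finite_tails
    by (simp add: sum.distrib case_prod_beta')
  finally show ?thesis .
qed

lemma contract_reglue_terms_cancel:
  assumes co: "cyclic_operad Op cmp ren un"
  shows "(\<Sum>(t, (x, y))\<in>Sigma T (avoiding_pairs V \<iota>).
            fscale (reglue_sign (V, \<iota>, T, c) x y) (contract2 cmp (reglued (V, \<iota>, T, c) x y) t y))
       + (\<Sum>((x, y), t)\<in>Sigma (reglue_pairs V \<iota>) (\<lambda>(x, y). T - {x, \<iota> x, y, \<iota> y}).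
            fscale (reglue_sign (V, \<iota>, T, c) x y) (contract2 cmp (reglued (V, \<iota>, T, c) x y) y t))
       \<in> fspan (og_rel Op ren)"
proof (rule sum_add_sum_in_fspan_bij[where \<phi> = "\<lambda>(t, p). (p, t)"], goal_cases)
  case 1
  show ?case
    by (rule bij_betwI[where g = "\<lambda>(p, t). (t, p)"])
      (auto simp: avoiding_pairs_def reglue_pairs_def inv_eq_iff)
next
  case (2 i)
  then obtain t x y where i: "i = (t, (x, y))" "t \<in> T" "x \<in> hedges V - {t, \<iota> t}"
      "y \<in> hedges V - {t, \<iota> t}" "x \<noteq> y" "x \<noteq> \<iota> y"
    unfolding avoiding_pairs_def by auto
  let ?T1 = "(T - {x, \<iota> x, y, \<iota> y}) \<union> {\<iota> x, y}"
  have G1: "ograph Op V (reglued_inv \<iota> x y) ?T1 c"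
    using i by (intro ograph_reglued_tails) (auto simp: reglue_pairs_def)
  have "t \<notin> {x, y, \<iota> x, \<iota> y}" using i by (auto simp: inv_eq_iff)
  then have facts: "t \<in> ?T1" "y \<in> ?T1" "y \<noteq> t" "y \<noteq> reglued_inv \<iota> x y t"
    using i by (auto simp: reglued_inv_def)
  have "contract2 cmp (V, reglued_inv \<iota> x y, ?T1, c) t y
      + fscale ((-1) ^ card (?T1 - ?T1)) (contract2 cmp (V, reglued_inv \<iota> x y, ?T1, c) y t)
      \<in> fspan (og_rel Op ren)"
    by (rule ograph.contract2_antisym[OF G1 co ograph.wf[OF G1] facts(1,1) _ facts(2,2) _ facts(3,4)]) simp_all
  from fspan_fscale[OF this, of "reglue_sign (V, \<iota>, T, c) x y"]
  show ?case
    by (simp add: i reglued_eq fscale_add)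
qed

text \<open>Regluing along (x, y) and along (\<open>\<iota> x\<close>, \<open>\<iota> y\<close>) gives the same graph up to orientation,
  with new edges \<open>x \<union> y\<close> and \<open>{\<iota> x, \<iota> y}\<close>; the two terms contract these edges in opposite orders.\<close>

lemma new_edge_terms_cancel:
  assumes co: "cyclic_operad Op cmp ren un"
  shows "(\<Sum>(x, y)\<in>reglue_pairs V \<iota>.
            fscale (reglue_sign (V, \<iota>, T, c) x y) (contract2 cmp (reglued (V, \<iota>, T, c) x y) y (\<iota> x)))
       \<in> fspan (og_rel Op ren)"
proof (rule sum_in_fspan_involution[OF finite_reglue_pairs, where \<phi> = "\<lambda>(x, y). (\<iota> x, \<iota> y)"])
  fix p assume "p \<in> reglue_pairs V \<iota>"
  then obtain x y where p: "p = (x, y)" "x \<in> hedges V" "y \<in> hedges V" "x \<noteq> y" "x \<noteq> \<iota> y"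
    by (auto simp: reglue_pairs_def)
  have distinct: "\<iota> x \<noteq> y" "x \<noteq> \<iota> x" "y \<noteq> \<iota> y" using p inv_neq by (auto simp: inv_eq_iff)
  have xy': "(\<iota> x, \<iota> y) \<in> reglue_pairs V \<iota>" using p inv_hedges by (auto simp: reglue_pairs_def)
  then show "(\<lambda>(x, y). (\<iota> x, \<iota> y)) p \<in> reglue_pairs V \<iota>" using p by simp
  show "(\<lambda>(x, y). (\<iota> x, \<iota> y)) ((\<lambda>(x, y). (\<iota> x, \<iota> y)) p) = p" using p by simp
  let ?T1 = "(T - {x, \<iota> x, y, \<iota> y}) \<union> {\<iota> x, y}"
  let ?T1' = "(T - {x, \<iota> x, y, \<iota> y}) \<union> {x, \<iota> y}"
  have inv': "reglued_inv \<iota> (\<iota> x) (\<iota> y) = reglued_inv \<iota> x y"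
    using distinct by (auto simp: reglued_inv_def fun_eq_iff)
  have T1': "(T - {\<iota> x, \<iota> (\<iota> x), \<iota> y, \<iota> (\<iota> y)}) \<union> {\<iota> (\<iota> x), \<iota> y} = ?T1'" by auto
  have G1: "ograph Op V (reglued_inv \<iota> x y) ?T1 c"
    using p by (intro ograph_reglued_tails) (auto simp: reglue_pairs_def)
  have G1': "ograph_wf Op (V, reglued_inv \<iota> x y, ?T1', c)"
    using ograph_reglued_tails[OF xy'] unfolding inv' T1' by (rule ograph.wf)
  have "y \<in> ?T1" "x \<in> ?T1'" "x \<in> {y, reglued_inv \<iota> x y y}"
    and "\<iota> x \<in> ?T1" "\<iota> y \<in> ?T1'" "\<iota> y \<in> {\<iota> x, reglued_inv \<iota> x y (\<iota> x)}"
    and "\<iota> x \<noteq> y" "\<iota> x \<noteq> reglued_inv \<iota> x y y"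
    using distinct p by (auto simp: reglued_inv_def)
  note D = ograph.contract2_antisym[OF G1 co G1' this]
  have "?T1 - ?T1' = {\<iota> x, y}" using distinct p by auto
  then have "card (?T1 - ?T1') = 2" using distinct by simp
  moreover have "reglue_sign (V, \<iota>, T, c) (\<iota> x) (\<iota> y) = reglue_sign (V, \<iota>, T, c) x y"
    using tail_iff[OF p(2)] tail_iff[OF p(3)] distinct p
    by (simp add: reglue_sign_bool_sign bool_sign_def)
  ultimately show "(case p of (x, y) \<Rightarrow> fscale (reglue_sign (V, \<iota>, T, c) x y) (contract2 cmp (reglued (V, \<iota>, T, c) x y) y (\<iota> x)))
      + (case (\<lambda>(x, y). (\<iota> x, \<iota> y)) p of (x, y) \<Rightarrow>
          fscale (reglue_sign (V, \<iota>, T, c) x y) (contract2 cmp (reglued (V, \<iota>, T, c) x y) y (\<iota> x)))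
      \<in> fspan (og_rel Op ren)"
    using fspan_fscale[OF D, of "reglue_sign (V, \<iota>, T, c) x y"]
    by (simp add: p reglued_eq inv' T1' fscale_add insert_commute)
qed

lemma dH_dE_gen:
  assumes "cyclic_operad Op cmp ren un"
  shows "lin_ext (dH cmp) (lin_ext (dE cmp) (gen (V, \<iota>, T, c)))
       + lin_ext (dE cmp) (lin_ext (dH cmp) (gen (V, \<iota>, T, c))) \<in> fspan (og_rel Op ren)"
  unfolding lin_ext_gen dH_dE_expansion dE_dH_expansion add.assoc[symmetric]
  using contract_reglue_terms_cancel[OF assms] new_edge_terms_cancel[OF assms] by (rule fspan_add)

end
theorem lemma2p37:
  fixes Op :: "'h set \<Rightarrow> 'v::real_vector set"
    and cmp :: "'h set \<Rightarrow> 'h \<Rightarrow> 'h set \<Rightarrow> 'h \<Rightarrow> 'v \<Rightarrow> 'v \<Rightarrow> 'v"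
    and ren :: "('h \<Rightarrow> 'h) \<Rightarrow> 'h set \<Rightarrow> 'v \<Rightarrow> 'v"
    and un :: "'h \<Rightarrow> 'h \<Rightarrow> 'v"
  assumes "cyclic_operad Op cmp ren un"
    and "finite_dimensional_components Op"
  shows "\<forall>f\<in>fspan (og_gens Op).
           lin_ext (dH cmp) (lin_ext (dH cmp) f) \<in> fspan (og_rel Op ren)
         \<and> lin_ext (dH cmp) (lin_ext (dE cmp) f) + lin_ext (dE cmp) (lin_ext (dH cmp) f)
             \<in> fspan (og_rel Op ren)"
proof
  fix f assume "f \<in> fspan (og_gens Op)"
  then obtain A cf where A: "finite A" "A \<subseteq> og_gens Op" and f: "f = (\<Sum>r\<in>A. fscale (cf r) r)"
    unfolding fspan_def by blast
  have gens: "\<forall>r\<in>A. \<exists>X. r = gen X" using A(2) unfolding og_gens_def by blast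
  have "lin_ext (dH cmp) (lin_ext (dH cmp) r) \<in> fspan (og_rel Op ren)"
    and "lin_ext (dH cmp) (lin_ext (dE cmp) r) + lin_ext (dE cmp) (lin_ext (dH cmp) r) \<in> fspan (og_rel Op ren)"
    if "r \<in> A" for r
    using that A(2) ograph.dH_dH_gen[OF ograph.intro assms(1)] ograph.dH_dE_gen[OF ograph.intro assms(1)]
    unfolding og_gens_def by auto
  then show "lin_ext (dH cmp) (lin_ext (dH cmp) f) \<in> fspan (og_rel Op ren)
      \<and> lin_ext (dH cmp) (lin_ext (dE cmp) f) + lin_ext (dE cmp) (lin_ext (dH cmp) f) \<in> fspan (og_rel Op ren)"
    unfolding f lin_ext_lin_ext_combination[OF gens finite_supp_dE]
      lin_ext_lin_ext_combination[OF gens finite_supp_dH] fscale_add[symmetric] sum.distrib[symmetric]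
    by (auto intro!: fspan_sum fspan_fscale)
qed

end
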